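(* Let $K$ be a field of characteristic different from $2$ and $3$. Let $A=H_3(C,\Gamma)$ be a reduced Albert algebra over $K$, where $C$ is an octonion algebra over $K$ and $\Gamma=(\gamma_1,\gamma_2,\gamma_3)\in(K^\times)^3$. Let $L_1\subset A$ be the subalgebra of diagonal matrices and let $L_2\subset A$ be an arbitrary split cubic étale subalgebra (i.e. a subalgebra isomorphic to $K\times K\times K$). Then there exists $g\in\mathrm{Str}(A)=\mathbf{Str}(A)(K)$ with $g(L_1)=L_2$.
   Context: $H_3(C,\Gamma)$ is the set of $3\times 3$ matrices of the form $\begin{pmatrix}\xi_1 & c_3 & \gamma_1^{-1}\gamma_3\overline{c_2}\\ \gamma_2^{-1}\gamma_1\overline{c_3} & \xi_2 & c_1\\ c_2 & \gamma_3^{-1}\gamma_2\overline{c_1} & \xi_3\end{pmatrix}$ with $\xi_i\in K$, $c_i\in C$, $\overline{\phantom{c}}$ the canonical involution of $C$; it is an Albert algebra under the symmetrized matrix product $\frac12(xy+yx)$, with cubic norm $N$. The structure group $\mathbf{Str}(A)$ is the group scheme of norm similarities: $\mathbf{Str}(A)(R)=\{x\in\mathbf{GL}(A)(R): N_R(x(a))=\nu(x)N_R(a)\ \forall a\in A\otimes_KR\}$, $\nu(x)\in R^\times$. *)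

theory Defs
  imports Main
begin

text \<open>A (not necessarily associative) unital K-algebra on a carrier type 'c
  (addition from the type class), together with a quadratic norm form.\<close>
record ('k, 'c) kalg =
  csmul :: "'k \<Rightarrow> 'c \<Rightarrow> 'c"
  cmul  :: "'c \<Rightarrow> 'c \<Rightarrow> 'c"
  cone  :: "'c"
  cnorm :: "'c \<Rightarrow> 'k"

definition polar :: "('k::field, 'c::ab_group_add) kalg \<Rightarrow> 'c \<Rightarrow> 'c \<Rightarrow> 'k" where
  "polar C x y = cnorm C (x + y) - cnorm C x - cnorm C y"

text \<open>Octonion algebra = 8-dimensional unital composition algebra
  (nondegenerate multiplicative quadratic norm).\<close>
definition octonion_algebra :: "('k::field, 'c::ab_group_add) kalg \<Rightarrow> bool" where
  "octonion_algebra C \<longleftrightarrow>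
     (\<forall>a x y. csmul C a (x + y) = csmul C a x + csmul C a y) \<and>
     (\<forall>a b x. csmul C (a + b) x = csmul C a x + csmul C b x) \<and>
     (\<forall>a b x. csmul C a (csmul C b x) = csmul C (a * b) x) \<and>
     (\<forall>x. csmul C 1 x = x) \<and>
     (\<forall>x y z. cmul C (x + y) z = cmul C x z + cmul C y z) \<and>
     (\<forall>x y z. cmul C x (y + z) = cmul C x y + cmul C x z) \<and>
     (\<forall>a x y. cmul C (csmul C a x) y = csmul C a (cmul C x y)) \<and>
     (\<forall>a x y. cmul C x (csmul C a y) = csmul C a (cmul C x y)) \<and>
     (\<forall>x. cmul C (cone C) x = x \<and> cmul C x (cone C) = x) \<and>
     (\<forall>a x. cnorm C (csmul C a x) = a ^ 2 * cnorm C x) \<and>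
     (\<forall>x y z. polar C (x + y) z = polar C x z + polar C y z) \<and>
     (\<forall>a x y. polar C (csmul C a x) y = a * polar C x y) \<and>
     (\<forall>x. (\<forall>y. polar C x y = 0) \<longrightarrow> x = 0) \<and>
     (\<forall>x y. cnorm C (cmul C x y) = cnorm C x * cnorm C y) \<and>
     (\<exists>e :: nat \<Rightarrow> 'c. \<forall>x. \<exists>!a :: nat \<Rightarrow> 'k.
         (\<forall>i\<ge>8. a i = 0) \<and> x = (\<Sum>i<8. csmul C (a i) (e i)))"

definition ctrace :: "('k::field, 'c::ab_group_add) kalg \<Rightarrow> 'c \<Rightarrow> 'k" where
  "ctrace C x = polar C x (cone C)"

definition cconj :: "('k::field, 'c::ab_group_add) kalg \<Rightarrow> 'c \<Rightarrow> 'c" where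
  "cconj C x = csmul C (ctrace C x) (cone C) - x"

text \<open>An element is given by its coordinates (xi1, xi2, xi3, c1, c2, c3).\<close>
type_synonym ('k, 'c) alb = "'k \<times> 'k \<times> 'k \<times> 'c \<times> 'c \<times> 'c"

definition alb_add :: "('k::field, 'c::ab_group_add) alb \<Rightarrow> ('k, 'c) alb \<Rightarrow> ('k, 'c) alb" where
  "alb_add x y = (case x of (a1, a2, a3, c1, c2, c3) \<Rightarrow> case y of (b1, b2, b3, d1, d2, d3) \<Rightarrow>
     (a1 + b1, a2 + b2, a3 + b3, c1 + d1, c2 + d2, c3 + d3))"

definition alb_smul :: "('k::field, 'c::ab_group_add) kalg \<Rightarrow> 'k \<Rightarrow> ('k, 'c) alb \<Rightarrow> ('k, 'c) alb" where
  "alb_smul C s x = (case x of (a1, a2, a3, c1, c2, c3) \<Rightarrow>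
     (s * a1, s * a2, s * a3, csmul C s c1, csmul C s c2, csmul C s c3))"

definition alb_one :: "('k::field, 'c::ab_group_add) alb" where
  "alb_one = (1, 1, 1, 0, 0, 0)"

definition albmat :: "('k::field, 'c::ab_group_add) kalg \<Rightarrow> 'k \<times> 'k \<times> 'k \<Rightarrow> ('k, 'c) alb
    \<Rightarrow> nat \<Rightarrow> nat \<Rightarrow> 'c" where
  "albmat C \<Gamma> x i j = (case \<Gamma> of (g1, g2, g3) \<Rightarrow> case x of (a1, a2, a3, c1, c2, c3) \<Rightarrow>
     (if i = 0 \<and> j = 0 then csmul C a1 (cone C)
      else if i = 0 \<and> j = 1 then c3
      else if i = 0 \<and> j = 2 then csmul C (inverse g1 * g3) (cconj C c2)
      else if i = 1 \<and> j = 0 then csmul C (inverse g2 * g1) (cconj C c3)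
      else if i = 1 \<and> j = 1 then csmul C a2 (cone C)
      else if i = 1 \<and> j = 2 then c1
      else if i = 2 \<and> j = 0 then c2
      else if i = 2 \<and> j = 1 then csmul C (inverse g3 * g2) (cconj C c1)
      else if i = 2 \<and> j = 2 then csmul C a3 (cone C)
      else 0))"

definition jmat :: "('k::field, 'c::ab_group_add) kalg \<Rightarrow> (nat \<Rightarrow> nat \<Rightarrow> 'c) \<Rightarrow> (nat \<Rightarrow> nat \<Rightarrow> 'c)
    \<Rightarrow> nat \<Rightarrow> nat \<Rightarrow> 'c" where
  "jmat C X Y i j = csmul C (inverse 2)
     ((\<Sum>k<3. cmul C (X i k) (Y k j)) + (\<Sum>k<3. cmul C (Y i k) (X k j)))"

definition is_jprod :: "('k::field, 'c::ab_group_add) kalg \<Rightarrow> 'k \<times> 'k \<times> 'k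
    \<Rightarrow> ('k, 'c) alb \<Rightarrow> ('k, 'c) alb \<Rightarrow> ('k, 'c) alb \<Rightarrow> bool" where
  "is_jprod C \<Gamma> x y z \<longleftrightarrow>
     (\<forall>i<3. \<forall>j<3. albmat C \<Gamma> z i j = jmat C (albmat C \<Gamma> x) (albmat C \<Gamma> y) i j)"

text \<open>Cubic norm of H_3(C,Gamma) (determinant of the matrix; N(1) = 1).\<close>
definition alb_norm :: "('k::field, 'c::ab_group_add) kalg \<Rightarrow> 'k \<times> 'k \<times> 'k \<Rightarrow> ('k, 'c) alb \<Rightarrow> 'k" where
  "alb_norm C \<Gamma> x = (case \<Gamma> of (g1, g2, g3) \<Rightarrow> case x of (a1, a2, a3, c1, c2, c3) \<Rightarrow>
      a1 * a2 * a3
      - a1 * (inverse g3 * g2) * cnorm C c1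
      - a2 * (inverse g1 * g3) * cnorm C c2
      - a3 * (inverse g2 * g1) * cnorm C c3
      + ctrace C (cmul C c3 (cmul C c1 c2)))"

text \<open>Full polarization of the cubic norm (its values over K determine N as a
  polynomial law, since char K is not 2 or 3).\<close>
definition alb_norm3 :: "('k::field, 'c::ab_group_add) kalg \<Rightarrow> 'k \<times> 'k \<times> 'k
    \<Rightarrow> ('k, 'c) alb \<Rightarrow> ('k, 'c) alb \<Rightarrow> ('k, 'c) alb \<Rightarrow> 'k" where
  "alb_norm3 C \<Gamma> a b c =
     alb_norm C \<Gamma> (alb_add (alb_add a b) c)
     - alb_norm C \<Gamma> (alb_add a b) - alb_norm C \<Gamma> (alb_add a c) - alb_norm C \<Gamma> (alb_add b c)
     + alb_norm C \<Gamma> a + alb_norm C \<Gamma> b + alb_norm C \<Gamma> c"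

definition alb_linear :: "('k::field, 'c::ab_group_add) kalg \<Rightarrow> (('k, 'c) alb \<Rightarrow> ('k, 'c) alb) \<Rightarrow> bool" where
  "alb_linear C g \<longleftrightarrow> (\<forall>x y. g (alb_add x y) = alb_add (g x) (g y)) \<and>
                        (\<forall>s x. g (alb_smul C s x) = alb_smul C s (g x))"

text \<open>K-points of the structure group Str(A): K-linear bijections g with a
  multiplier nu in K^x such that N(g a) = nu N(a) as polynomial laws; the
  polynomial identity is expressed through the fully polarized norm.\<close>
definition in_Str :: "('k::field, 'c::ab_group_add) kalg \<Rightarrow> 'k \<times> 'k \<times> 'k
    \<Rightarrow> (('k, 'c) alb \<Rightarrow> ('k, 'c) alb) \<Rightarrow> bool" where
  "in_Str C \<Gamma> g \<longleftrightarrow> alb_linear C g \<and> bij g \<and>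
     (\<exists>\<nu>. \<nu> \<noteq> 0 \<and>
        (\<forall>a. alb_norm C \<Gamma> (g a) = \<nu> * alb_norm C \<Gamma> a) \<and>
        (\<forall>a b c. alb_norm3 C \<Gamma> (g a) (g b) (g c) = \<nu> * alb_norm3 C \<Gamma> a b c))"

definition diag_sub :: "('k::field, 'c::ab_group_add) alb set" where
  "diag_sub = {(a1, a2, a3, 0, 0, 0) | a1 a2 a3. True}"

definition split_cubic_etale_sub :: "('k::field, 'c::ab_group_add) kalg \<Rightarrow> 'k \<times> 'k \<times> 'k
    \<Rightarrow> ('k, 'c) alb set \<Rightarrow> bool" where
  "split_cubic_etale_sub C \<Gamma> L \<longleftrightarrow>
     alb_one \<in> L \<and>
     (\<forall>x\<in>L. \<forall>y\<in>L. alb_add x y \<in> L) \<and>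
     (\<forall>s. \<forall>x\<in>L. alb_smul C s x \<in> L) \<and>
     (\<forall>x\<in>L. \<forall>y\<in>L. \<exists>z\<in>L. is_jprod C \<Gamma> x y z) \<and>
     (\<exists>\<phi> :: 'k \<times> 'k \<times> 'k \<Rightarrow> ('k, 'c) alb.
        bij_betw \<phi> UNIV L \<and>
        (\<forall>a1 a2 a3 b1 b2 b3. \<phi> (a1 + b1, a2 + b2, a3 + b3) = alb_add (\<phi> (a1, a2, a3)) (\<phi> (b1, b2, b3))) \<and>
        (\<forall>s a1 a2 a3. \<phi> (s * a1, s * a2, s * a3) = alb_smul C s (\<phi> (a1, a2, a3))) \<and>
        (\<forall>a1 a2 a3 b1 b2 b3. is_jprod C \<Gamma> (\<phi> (a1, a2, a3)) (\<phi> (b1, b2, b3))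
                                 (\<phi> (a1 * b1, a2 * b2, a3 * b3))))"

end

theory Submission
  imports Defs HOL.Modules
begin

(* A split cubic etale subalgebra L = K x K x K is spanned by three idempotents f1, f2, f3 with
   f1 + f2 + f3 = 1, none of them scalar.  The adjoint identity x# o x = N(x) 1 forces the trace
   of a non-scalar idempotent to be 1 or 2; since the three traces add up to 3 and
   char K is neither 2 nor 3, each trace is 1, which makes every fi of rank one (fi# = 0), and the
   trilinearised norm gives N(f1, f2, f3) = N(1) = 1.  Elementary transvections, which preserve
   the norm, then move f1 to a multiple of the diagonal idempotent e1, next f2 to a multiple of
   e2 while fixing e1, and finally f3 to a multiple of e3 while fixing e1 and e2; the relation
   N(f1, f2, f3) <> 0 provides the nonzero coordinates needed at each stage.  The inverse of the
   resulting norm similarity maps the diagonal subalgebra onto L. *)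

section \<open>Composition algebras\<close>

locale composition_algebra = module "csmul C"
  for C :: "('k::field, 'c::ab_group_add) kalg" +
  assumes mul_add_left: "cmul C (x + y) z = cmul C x z + cmul C y z"
    and mul_add_right: "cmul C x (y + z) = cmul C x y + cmul C x z"
    and mul_sm_left: "cmul C (csmul C a x) y = csmul C a (cmul C x y)"
    and mul_sm_right: "cmul C x (csmul C a y) = csmul C a (cmul C x y)"
    and one_mul: "cmul C (cone C) x = x"
    and mul_one: "cmul C x (cone C) = x"
    and nn_sm: "cnorm C (csmul C a x) = a ^ 2 * cnorm C x"
    and pl_add_left: "polar C (x + y) z = polar C x z + polar C y z"
    and pl_sm_left: "polar C (csmul C a x) y = a * polar C x y"
    and pl_nondegenerate: "(\<And>y. polar C x y = 0) \<Longrightarrow> x = 0"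
    and nn_mul: "cnorm C (cmul C x y) = cnorm C x * cnorm C y"
    and one_neq_zero: "cone C \<noteq> 0"

lemma octonion_algebra_one_neq_zero:
  fixes C :: "('k::field, 'c::ab_group_add) kalg"
  assumes "octonion_algebra C"
  shows "cone C \<noteq> 0"
proof
  assume one: "cone C = 0"
  \<comment> \<open>then the algebra is zero, so the coordinates of \<open>0\<close> in the basis are not unique\<close>
  have trivial: "x = 0" for x :: 'c
  proof -
    have "additive (cmul C x)" "cmul C x (cone C) = x"
      using assms unfolding octonion_algebra_def additive_def by auto
    then show ?thesis unfolding one by (simp add: additive.zero)
  qed
  from assms obtain e :: "nat \<Rightarrow> 'c" where
    "\<forall>x. \<exists>!a :: nat \<Rightarrow> 'k. (\<forall>i\<ge>8. a i = 0) \<and> x = (\<Sum>i<8. csmul C (a i) (e i))"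
    unfolding octonion_algebra_def by (elim conjE) blast
  then have unique: "\<exists>!a :: nat \<Rightarrow> 'k. (\<forall>i\<ge>8. a i = 0) \<and> (0::'c) = (\<Sum>i<8. csmul C (a i) (e i))"
    by blast
  have "(THE a. (\<forall>i\<ge>(8::nat). a i = 0) \<and> (0::'c) = (\<Sum>i<8. csmul C (a i) (e i))) = (\<lambda>i. 0)"
    by (rule the1_equality[OF unique]) (simp add: trivial[of "\<Sum>i<8. csmul C 0 (e i)"])
  moreover have "(THE a. (\<forall>i\<ge>(8::nat). a i = 0) \<and> (0::'c) = (\<Sum>i<8. csmul C (a i) (e i)))
      = (\<lambda>i. if i = 0 then 1 else 0)"
    by (rule the1_equality[OF unique])
      (simp add: trivial[of "\<Sum>i<8. csmul C (if i = 0 then 1 else 0) (e i)"])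
  ultimately have "(\<lambda>i::nat. 0::'k) = (\<lambda>i. if i = 0 then 1 else 0)" by simp
  then show False by (metis zero_neq_one)
qed

lemma octonion_algebra_composition_algebra:
  fixes C :: "('k::field, 'c::ab_group_add) kalg"
  assumes "octonion_algebra C"
  shows "composition_algebra C"
proof (rule composition_algebra.intro)
  show "module (csmul C)"
    using assms unfolding octonion_algebra_def by unfold_locales auto
  show "composition_algebra_axioms C"
    using assms octonion_algebra_one_neq_zero[OF assms]
    unfolding octonion_algebra_def composition_algebra_axioms_def
    by (elim conjE) (intro conjI; meson)
qed

context composition_algebra
begin

abbreviation "sm \<equiv> csmul C"
abbreviation "mul \<equiv> cmul C"
abbreviation "one \<equiv> cone C"
abbreviation "nn \<equiv> cnorm C"
abbreviation "pl \<equiv> polar C"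
abbreviation "tr \<equiv> ctrace C"
abbreviation "cj \<equiv> cconj C"

lemma pl_sym: "pl x y = pl y x"
  unfolding polar_def by (simp add: add.commute)

lemma pl_add_right: "pl x (y + z) = pl x y + pl x z"
  by (subst (1 2 3) pl_sym) (rule pl_add_left)

lemma pl_sm_right: "pl x (sm a y) = a * pl x y"
  by (subst (1 2) pl_sym) (rule pl_sm_left)

sublocale pl_left: additive "\<lambda>x. pl x y" by unfold_locales (rule pl_add_left)
sublocale pl_right: additive "\<lambda>y. pl x y" by unfold_locales (rule pl_add_right)
sublocale mul_left: additive "\<lambda>x. mul x y" by unfold_locales (rule mul_add_left)
sublocale mul_right: additive "\<lambda>y. mul x y" by unfold_locales (rule mul_add_right)

lemmas pl_zero_left[simp] = pl_left.zero and pl_zero_right[simp] = pl_right.zero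
  and pl_neg_left[simp] = pl_left.minus and pl_neg_right[simp] = pl_right.minus
  and pl_diff_left = pl_left.diff and pl_diff_right = pl_right.diff
  and mul_zero_left[simp] = mul_left.zero and mul_zero_right[simp] = mul_right.zero
  and mul_neg_left[simp] = mul_left.minus and mul_neg_right[simp] = mul_right.minus
  and mul_diff_left = mul_left.diff and mul_diff_right = mul_right.diff

lemma nn_zero[simp]: "nn 0 = 0"
  using nn_sm[of 0 0] by simp

lemma sm_two: "sm 2 x = x + x"
  using scale_left_distrib[of 1 1 x] by (simp only: one_add_one scale_one)

lemma nn_add: "nn (x + y) = nn x + nn y + pl x y"
  unfolding polar_def by simp

lemma pl_self: "pl x x = 2 * nn x"
proof -
  have "nn (x + x) = 4 * nn x" using nn_sm[of 2 x] by (simp add: sm_two)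
  then show ?thesis unfolding polar_def by simp
qed

lemma nn_neg[simp]: "nn (-x) = nn x"
  using nn_sm[of "-1" x] by simp

lemma exists_pl_nonzero: "x \<noteq> 0 \<Longrightarrow> \<exists>y. pl y x \<noteq> 0"
  using pl_nondegenerate pl_sym by metis

lemma pl_ext: "(\<And>z. pl x z = pl y z) \<Longrightarrow> x = y"
proof -
  assume "\<And>z. pl x z = pl y z"
  then have "x - y = 0" by (intro pl_nondegenerate) (simp add: pl_diff_left)
  then show "x = y" by simp
qed

lemma nn_one: "nn one = 1"
proof -
  have e: "nn one = nn one * nn one" using nn_mul[of one one] by (simp add: one_mul)
  show ?thesis
  proof (rule ccontr)
    assume "nn one \<noteq> 1"
    then have z: "nn one = 0" using e by (metis mult_cancel_left1)
    have "\<And>x. nn x = 0" using nn_mul[of _ one] z by (simp add: mul_one)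
    then have "pl one y = 0" for y unfolding polar_def by simp
    then show False using pl_nondegenerate one_neq_zero by blast
  qed
qed

lemma sm_eq_0_iff: "sm a x = 0 \<longleftrightarrow> a = 0 \<or> x = 0"
proof
  assume h: "sm a x = 0"
  show "a = 0 \<or> x = 0"
  proof (rule ccontr)
    assume "\<not> (a = 0 \<or> x = 0)"
    then have "a \<noteq> 0" "x \<noteq> 0" by auto
    have "sm (inverse a) (sm a x) = x" using \<open>a \<noteq> 0\<close> by simp
    then show False using h \<open>x \<noteq> 0\<close> by simp
  qed
qed auto

lemma sm_one_eq_iff: "sm a one = sm b one \<longleftrightarrow> a = b"
proof
  assume "sm a one = sm b one"
  then have "sm (a - b) one = 0" by (simp add: scale_left_diff_distrib)
  then show "a = b" using one_neq_zero sm_eq_0_iff by auto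
qed simp

lemma pl_mul_mul_left: "pl (mul x y) (mul x z) = nn x * pl y z"
proof -
  have "nn (mul x (y + z)) = nn x * nn (y + z)" by (rule nn_mul)
  then show ?thesis by (simp add: mul_add_right nn_add nn_mul algebra_simps)
qed

lemma pl_mul_mul_right: "pl (mul y x) (mul z x) = nn x * pl y z"
proof -
  have "nn (mul (y + z) x) = nn (y + z) * nn x" by (rule nn_mul)
  then show ?thesis by (simp add: mul_add_left nn_add nn_mul algebra_simps)
qed

lemma pl_mul_mul_left_linear: "pl (mul x y) (mul w z) + pl (mul w y) (mul x z) = pl x w * pl y z"
proof -
  have "pl (mul (x + w) y) (mul (x + w) z) = nn (x + w) * pl y z" by (rule pl_mul_mul_left)
  then show ?thesis using pl_sym[of w x]
    by (simp add: mul_add_left pl_add_left pl_add_right pl_mul_mul_left nn_add algebra_simps)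
qed

lemma pl_mul_mul_right_linear: "pl (mul y x) (mul z w) + pl (mul y w) (mul z x) = pl x w * pl y z"
proof -
  have "pl (mul y (x + w)) (mul z (x + w)) = nn (x + w) * pl y z" by (rule pl_mul_mul_right)
  then show ?thesis using pl_sym[of w x]
    by (simp add: mul_add_right pl_add_left pl_add_right pl_mul_mul_right nn_add algebra_simps)
qed

lemma tr_def': "tr x = pl x one" by (simp add: ctrace_def)
lemma cj_def': "cj x = sm (tr x) one - x" by (simp add: cconj_def)

lemma tr_one: "tr one = 2" by (simp add: tr_def' pl_self nn_one)
lemma tr_add: "tr (x + y) = tr x + tr y" by (simp add: tr_def' pl_add_left)
lemma tr_sm: "tr (sm a x) = a * tr x" by (simp add: tr_def' pl_sm_left)
lemma tr_zero[simp]: "tr 0 = 0" by (simp add: tr_def')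
lemma tr_neg[simp]: "tr (- x) = - tr x" by (simp add: tr_def')
lemma tr_diff: "tr (x - y) = tr x - tr y" by (simp add: tr_def' pl_diff_left)

lemma mul_sm_one_left: "mul (sm a one) x = sm a x" by (simp add: mul_sm_left one_mul)
lemma mul_sm_one_right: "mul x (sm a one) = sm a x" by (simp add: mul_sm_right mul_one)

lemma pl_one_sm: "pl (sm a one) y = a * tr y" by (simp add: pl_sm_left tr_def' pl_sym[of one y])

lemma pl_mul_left_adjoint: "pl (mul x y) z = pl y (mul (cj x) z)"
proof -
  have "pl (mul x y) (mul one z) + pl (mul one y) (mul x z) = pl x one * pl y z" by (rule pl_mul_mul_left_linear)
  then have "pl (mul x y) z = tr x * pl y z - pl y (mul x z)"
    by (simp add: one_mul tr_def' algebra_simps)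
  also have "\<dots> = pl y (mul (cj x) z)"
    by (simp add: cj_def' mul_diff_left mul_sm_one_left pl_diff_right pl_sm_right)
  finally show ?thesis .
qed

lemma pl_mul_right_adjoint: "pl (mul y x) z = pl y (mul z (cj x))"
proof -
  have "pl (mul y x) (mul z one) + pl (mul y one) (mul z x) = pl x one * pl y z" by (rule pl_mul_mul_right_linear)
  then have "pl (mul y x) z = tr x * pl y z - pl y (mul z x)"
    by (simp add: mul_one tr_def' algebra_simps)
  also have "\<dots> = pl y (mul z (cj x))"
    by (simp add: cj_def' mul_diff_right mul_sm_one_right pl_diff_right pl_sm_right)
  finally show ?thesis .
qed

lemma tr_cj: "tr (cj x) = tr x"
  by (simp add: cj_def' tr_diff tr_sm tr_one)

lemma cj_cj[simp]: "cj (cj x) = x"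
  by (simp only: cj_def'[of "cj x"] tr_cj) (simp add: cj_def')

lemma cj_add: "cj (x + y) = cj x + cj y"
  by (simp add: cj_def' tr_add scale_left_distrib)
lemma cj_sm: "cj (sm a x) = sm a (cj x)"
  by (simp add: cj_def' tr_sm scale_right_diff_distrib)
lemma cj_zero[simp]: "cj 0 = 0" by (simp add: cj_def')
lemma cj_neg: "cj (- x) = - cj x" by (simp add: cj_def')
lemma cj_diff: "cj (x - y) = cj x - cj y"
  by (simp add: cj_def' tr_diff scale_left_diff_distrib)
lemma nn_cj: "nn (cj x) = nn x"
proof -
  have "nn (cj x) = nn (sm (tr x) one + (- x))" by (simp add: cj_def')
  also have "\<dots> = nn x"
    by (simp only: nn_add nn_sm nn_one nn_neg pl_neg_right pl_one_sm) (simp add: power2_eq_square)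
  finally show ?thesis .
qed

lemma cj_mul_mul: "mul (cj x) (mul x y) = sm (nn x) y"
proof (rule pl_ext)
  fix z
  have "pl (mul (cj x) (mul x y)) z = pl (mul x y) (mul x z)"
    using pl_mul_left_adjoint[of "cj x" "mul x y" z] by simp
  then show "pl (mul (cj x) (mul x y)) z = pl (sm (nn x) y) z" by (simp add: pl_mul_mul_left pl_sm_left)
qed

lemma mul_mul_cj: "mul (mul y x) (cj x) = sm (nn x) y"
proof (rule pl_ext)
  fix z
  have "pl (mul (mul y x) (cj x)) z = pl (mul y x) (mul z x)"
    using pl_mul_right_adjoint[of "mul y x" "cj x" z] by simp
  then show "pl (mul (mul y x) (cj x)) z = pl (sm (nn x) y) z" by (simp add: pl_mul_mul_right pl_sm_left)
qed

lemma mul_cj_mul: "mul x (mul (cj x) y) = sm (nn x) y"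
  using cj_mul_mul[of "cj x" y] by (simp add: nn_cj)

lemma mul_mul_cj': "mul (mul y (cj x)) x = sm (nn x) y"
  using mul_mul_cj[of y "cj x"] by (simp add: nn_cj)

lemma mul_cj_self: "mul x (cj x) = sm (nn x) one"
  using mul_cj_mul[of x one] by (simp add: mul_one)

lemma pl_cj_left: "pl (cj x) y = tr x * tr y - pl x y"
  by (simp add: cj_def' pl_diff_left pl_one_sm)

lemma pl_cj_right: "pl x (cj y) = tr x * tr y - pl x y"
  using pl_cj_left[of y x] by (simp add: pl_sym[of _ x] mult.commute)

lemma tr_mul: "tr (mul x y) = pl (cj x) y"
  using pl_mul_left_adjoint[of x y one] by (simp add: tr_def' mul_one pl_sym[of y "cj x"])

lemma tr_mul_comm: "tr (mul x y) = tr (mul y x)"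
  by (simp add: tr_mul pl_cj_left pl_sym[of x y] mult.commute)

lemma mul_self_eq: "mul x x = sm (tr x) x - sm (nn x) one"
proof -
  have "mul x (cj x) = sm (nn x) one" by (rule mul_cj_self)
  then show ?thesis
    by (simp add: cj_def' mul_diff_right mul_sm_one_right algebra_simps)
qed

lemma mul_add_mul_swap: "mul x y + mul y x = sm (tr x) y + sm (tr y) x - sm (pl x y) one"
proof -
  have "mul (x + y) (x + y) = sm (tr (x + y)) (x + y) - sm (nn (x + y)) one" by (rule mul_self_eq)
  then have "mul x x + mul x y + mul y x + mul y y =
     sm (tr x) x + sm (tr x) y + sm (tr y) x + sm (tr y) y - sm (nn x) one - sm (nn y) one - sm (pl x y) one"
    by (simp add: mul_add_left mul_add_right tr_add nn_add scale_left_distrib scale_right_distrib algebra_simps)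
  then show ?thesis by (simp add: mul_self_eq algebra_simps)
qed

lemma cj_mul: "cj (mul x y) = mul (cj y) (cj x)"
proof -
  have "mul (cj y) (cj x) = sm (tr x * tr y) one - sm (tr y) x - sm (tr x) y + mul y x"
    by (simp add: cj_def' mul_diff_left mul_diff_right mul_sm_one_left mul_sm_one_right
        mul_sm_left mul_sm_right one_mul mul_one algebra_simps mult.commute)
  also have "\<dots> = sm (tr x * tr y - pl x y) one - mul x y"
    using mul_add_mul_swap[of x y] by (simp add: scale_left_diff_distrib algebra_simps)
  also have "\<dots> = cj (mul x y)"
    by (simp add: cj_def'[of "mul x y"] tr_mul pl_cj_left)
  finally show ?thesis by simp
qed

lemma tr_assoc: "tr (mul (mul x y) z) = tr (mul x (mul y z))"
proof -
  have "tr (mul (mul x y) z) = pl (cj (mul x y)) z" by (rule tr_mul)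
  also have "\<dots> = pl (mul y z) (cj x)"
    using pl_mul_left_adjoint[of y z "cj x"] by (simp add: cj_mul pl_sym[of z])
  also have "\<dots> = tr (mul x (mul y z))" by (simp add: tr_mul pl_sym)
  finally show ?thesis .
qed

lemma tr_cyc: "tr (mul x (mul y z)) = tr (mul y (mul z x))"
  by (metis tr_assoc tr_mul_comm)

lemma pl_eq_tr_mul_cj: "pl x y = tr (mul x (cj y))"
  by (simp add: tr_mul pl_cj_left pl_cj_right tr_cj algebra_simps)

lemma pl_cj_cj: "pl (cj x) (cj y) = pl x y"
  by (simp add: pl_cj_left pl_cj_right tr_cj)

lemma pl_cj_mul: "pl (cj (mul x y)) w = tr (mul y (mul w x))"
proof -
  have "pl (cj (mul x y)) w = pl (mul x y) (cj w)" using pl_cj_cj[of "mul x y" "cj w"] by simp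
  also have "\<dots> = tr (mul (mul x y) w)" by (simp add: pl_eq_tr_mul_cj)
  also have "\<dots> = tr (mul y (mul w x))" using tr_assoc[of x y w] tr_cyc[of x y w] by simp
  finally show ?thesis .
qed

lemma pl_mul_cj_swap: "pl (mul d (cj c)) w = pl c d * tr w - pl (mul c (cj d)) w"
proof -
  have "mul d (cj c) = cj (mul c (cj d))" by (simp add: cj_mul)
  also have "\<dots> = sm (tr (mul c (cj d))) one - mul c (cj d)" by (simp add: cj_def')
  finally show ?thesis by (simp add: pl_diff_left pl_one_sm pl_eq_tr_mul_cj[symmetric])
qed

lemma pl_cj_mul_swap: "pl (mul (cj d) c) w = pl c d * tr w - pl (mul (cj c) d) w"
proof -
  have "mul (cj d) c = cj (mul (cj c) d)" by (simp add: cj_mul)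
  also have "\<dots> = sm (tr (mul (cj c) d)) one - mul (cj c) d" by (simp add: cj_def')
  finally show ?thesis by (simp add: pl_diff_left pl_one_sm tr_mul)
qed

lemma pl_one_left: "pl one z = tr z" by (simp add: tr_def' pl_sym)

lemma tr_mul_cj_self: "tr (mul s (cj s)) = 2 * nn s"
  by (simp add: mul_cj_self tr_sm tr_one)

section \<open>Coordinates on \<open>H\<^sub>3(C, \<Gamma>)\<close>\<close>

(* The coefficients p1, p2, p3 stand for g3^-1 g2, g1^-1 g3, g2^-1 g1 in alb_norm.  Only
   p1 p2 p3 = 1 is ever used, and this is invariant under the cyclic relabelling rot of the
   coordinates, which lets one argument serve for all three index pairs. *)

fun cubic_norm :: "'k \<Rightarrow> 'k \<Rightarrow> 'k \<Rightarrow> ('k,'c) alb \<Rightarrow> 'k" where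
  "cubic_norm p1 p2 p3 (a1,a2,a3,c1,c2,c3) =
     a1*a2*a3 - p1*a1*nn c1 - p2*a2*nn c2 - p3*a3*nn c3 + tr (mul c3 (mul c1 c2))"

fun sharp :: "'k \<Rightarrow> 'k \<Rightarrow> 'k \<Rightarrow> ('k,'c) alb \<Rightarrow> ('k,'c) alb" where
  "sharp p1 p2 p3 (a1,a2,a3,c1,c2,c3) =
     (a2*a3 - p1*nn c1, a1*a3 - p2*nn c2, a1*a2 - p3*nn c3,
      sm (p2*p3) (cj (mul c2 c3)) - sm a1 c1,
      sm (p1*p3) (cj (mul c3 c1)) - sm a2 c2,
      sm (p1*p2) (cj (mul c1 c2)) - sm a3 c3)"

fun trace_form :: "'k \<Rightarrow> 'k \<Rightarrow> 'k \<Rightarrow> ('k,'c) alb \<Rightarrow> ('k,'c) alb \<Rightarrow> 'k" where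
  "trace_form p1 p2 p3 (a1,a2,a3,c1,c2,c3) (b1,b2,b3,d1,d2,d3) =
     a1*b1 + a2*b2 + a3*b3 + p1 * pl c1 d1 + p2 * pl c2 d2 + p3 * pl c3 d3"

definition norm_deriv :: "'k \<Rightarrow> 'k \<Rightarrow> 'k \<Rightarrow> ('k,'c) alb \<Rightarrow> ('k,'c) alb \<Rightarrow> 'k" where
  "norm_deriv p1 p2 p3 x y = trace_form p1 p2 p3 (sharp p1 p2 p3 x) y"

lemma alb_add_simp: "alb_add (a1,a2,a3,c1,c2,c3) (b1,b2,b3,d1,d2,d3) =
   (a1+b1, a2+b2, a3+b3, c1+d1, c2+d2, c3+d3)"
  by (simp add: alb_add_def)

lemma alb_smul_simp: "alb_smul C k (a1,a2,a3,c1,c2,c3) = (k*a1, k*a2, k*a3, sm k c1, sm k c2, sm k c3)"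
  by (simp add: alb_smul_def)

lemma norm_deriv_simp: "norm_deriv p1 p2 p3 (a1,a2,a3,c1,c2,c3) (b1,b2,b3,d1,d2,d3) =
   (a2*a3 - p1*nn c1)*b1 + (a1*a3 - p2*nn c2)*b2 + (a1*a2 - p3*nn c3)*b3
   + p1*(p2*p3*tr (mul c3 (mul d1 c2)) - a1 * pl c1 d1)
   + p2*(p1*p3*tr (mul c1 (mul d2 c3)) - a2 * pl c2 d2)
   + p3*(p1*p2*tr (mul c2 (mul d3 c1)) - a3 * pl c3 d3)"
  by (simp add: norm_deriv_def pl_diff_left pl_sm_left pl_cj_mul)

lemma cubic_norm_add:
  assumes p: "p1*p2*p3 = 1"
  shows "cubic_norm p1 p2 p3 (alb_add u y) =
    cubic_norm p1 p2 p3 u + norm_deriv p1 p2 p3 u y + norm_deriv p1 p2 p3 y u + cubic_norm p1 p2 p3 y"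
proof -
  obtain a1 a2 a3 c1 c2 c3 where u: "u = (a1,a2,a3,c1,c2,c3)" by (cases u) auto
  obtain b1 b2 b3 d1 d2 d3 where y: "y = (b1,b2,b3,d1,d2,d3)" by (cases y) auto
  have t1: "tr (mul c1 (mul d2 c3)) = tr (mul c3 (mul c1 d2))" by (rule tr_cyc[symmetric])
  have t2: "tr (mul c2 (mul d3 c1)) = tr (mul d3 (mul c1 c2))" by (rule tr_cyc)
  have t3: "tr (mul d1 (mul c2 d3)) = tr (mul d3 (mul d1 c2))" by (rule tr_cyc[symmetric])
  have t4: "tr (mul d2 (mul c3 d1)) = tr (mul c3 (mul d1 d2))" by (rule tr_cyc)
  have s1: "pl d1 c1 = pl c1 d1" "pl d2 c2 = pl c2 d2" "pl d3 c3 = pl c3 d3" by (simp_all add: pl_sym)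
  have p2': "p1*(p2*(p3*X)) = X" for X using p by (simp add: mult.assoc[symmetric])
  show ?thesis
    unfolding u y alb_add_simp cubic_norm.simps norm_deriv_simp
    by (simp add: mul_add_left mul_add_right tr_add nn_add t1 t2 t3 t4 s1 algebra_simps p2')
qed

definition cubic_norm3 :: "'k \<Rightarrow> 'k \<Rightarrow> 'k \<Rightarrow> ('k,'c) alb \<Rightarrow> ('k,'c) alb \<Rightarrow> ('k,'c) alb \<Rightarrow> 'k" where
  "cubic_norm3 p1 p2 p3 a b c =
     cubic_norm p1 p2 p3 (alb_add (alb_add a b) c)
     - cubic_norm p1 p2 p3 (alb_add a b) - cubic_norm p1 p2 p3 (alb_add a c) - cubic_norm p1 p2 p3 (alb_add b c)
     + cubic_norm p1 p2 p3 a + cubic_norm p1 p2 p3 b + cubic_norm p1 p2 p3 c"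

lemma cubic_norm_smul: "cubic_norm p1 p2 p3 (alb_smul C k u) = k^3 * cubic_norm p1 p2 p3 u"
proof -
  obtain a1 a2 a3 c1 c2 c3 where u: "u = (a1,a2,a3,c1,c2,c3)" by (cases u) auto
  show ?thesis unfolding u alb_smul_simp cubic_norm.simps
    by (simp add: nn_sm mul_sm_left mul_sm_right tr_sm algebra_simps power2_eq_square power3_eq_cube)
qed

lemma sharp_smul: "sharp p1 p2 p3 (alb_smul C k u) = alb_smul C (k^2) (sharp p1 p2 p3 u)"
proof -
  obtain a1 a2 a3 c1 c2 c3 where u: "u = (a1,a2,a3,c1,c2,c3)" by (cases u) auto
  show ?thesis unfolding u alb_smul_simp sharp.simps
    by (simp add: nn_sm mul_sm_left mul_sm_right cj_sm scale_right_diff_distrib algebra_simps power2_eq_square)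
qed

lemma trace_form_smul_left: "trace_form p1 p2 p3 (alb_smul C k u) y = k * trace_form p1 p2 p3 u y"
proof -
  obtain a1 a2 a3 c1 c2 c3 where u: "u = (a1,a2,a3,c1,c2,c3)" by (cases u) auto
  obtain b1 b2 b3 d1 d2 d3 where y: "y = (b1,b2,b3,d1,d2,d3)" by (cases y) auto
  show ?thesis unfolding u y alb_smul_simp trace_form.simps by (simp add: pl_sm_left algebra_simps)
qed

lemma trace_form_smul_right: "trace_form p1 p2 p3 u (alb_smul C k y) = k * trace_form p1 p2 p3 u y"
proof -
  obtain a1 a2 a3 c1 c2 c3 where u: "u = (a1,a2,a3,c1,c2,c3)" by (cases u) auto
  obtain b1 b2 b3 d1 d2 d3 where y: "y = (b1,b2,b3,d1,d2,d3)" by (cases y) auto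
  show ?thesis unfolding u y alb_smul_simp trace_form.simps by (simp add: pl_sm_right algebra_simps)
qed

lemma norm_deriv_smul_left: "norm_deriv p1 p2 p3 (alb_smul C k u) y = k^2 * norm_deriv p1 p2 p3 u y"
  by (simp add: norm_deriv_def sharp_smul trace_form_smul_left)

lemma norm_deriv_smul_right: "norm_deriv p1 p2 p3 u (alb_smul C k y) = k * norm_deriv p1 p2 p3 u y"
  by (simp add: norm_deriv_def trace_form_smul_right)

lemma alb_add_self: "alb_add u u = alb_smul C 2 u"
proof -
  obtain a1 a2 a3 c1 c2 c3 where u: "u = (a1,a2,a3,c1,c2,c3)" by (cases u) auto
  show ?thesis unfolding u alb_smul_simp alb_add_simp by (simp add: sm_two)
qed

lemma cubic_norm3_eq_norm_deriv:
  assumes p: "p1*p2*p3 = 1"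
  shows "cubic_norm3 p1 p2 p3 u u y = 2 * norm_deriv p1 p2 p3 u y"
  unfolding cubic_norm3_def alb_add_self cubic_norm_add[OF p] cubic_norm_smul norm_deriv_smul_left norm_deriv_smul_right
  by (simp add: algebra_simps power2_eq_square power3_eq_cube)

definition alb_zero :: "('k,'c) alb" where "alb_zero = (0,0,0,0,0,0)"

fun rot :: "('k,'c) alb \<Rightarrow> ('k,'c) alb" where
  "rot (a1,a2,a3,c1,c2,c3) = (a2,a3,a1,c2,c3,c1)"

fun rot_inv :: "('k,'c) alb \<Rightarrow> ('k,'c) alb" where
  "rot_inv (a1,a2,a3,c1,c2,c3) = (a3,a1,a2,c3,c1,c2)"

lemma rot_rot_inv[simp]: "rot (rot_inv x) = x" by (cases x) simp
lemma rot_inv_rot[simp]: "rot_inv (rot x) = x" by (cases x) simp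

lemma cubic_norm_rot: "cubic_norm p1 p2 p3 x = cubic_norm p2 p3 p1 (rot x)"
proof -
  obtain a1 a2 a3 c1 c2 c3 where u: "x = (a1,a2,a3,c1,c2,c3)" by (cases x) auto
  have "tr (mul c3 (mul c1 c2)) = tr (mul c1 (mul c2 c3))" by (rule tr_cyc)
  then show ?thesis unfolding u rot.simps cubic_norm.simps by (simp add: algebra_simps)
qed

lemma cubic_norm_rot_inv: "cubic_norm p1 p2 p3 (rot_inv y) = cubic_norm p2 p3 p1 y"
  using cubic_norm_rot[of p1 p2 p3 "rot_inv y"] by simp

definition norm_similarity :: "'k \<Rightarrow> 'k \<Rightarrow> 'k \<Rightarrow> (('k,'c) alb \<Rightarrow> ('k,'c) alb) \<Rightarrow> bool" where
  "norm_similarity p1 p2 p3 h \<longleftrightarrow> alb_linear C h \<and> bij h \<and>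
     (\<exists>\<nu>. \<nu> \<noteq> 0 \<and> (\<forall>a. cubic_norm p1 p2 p3 (h a) = \<nu> * cubic_norm p1 p2 p3 a))"

lemma rot_linear: "alb_linear C rot"
  unfolding alb_linear_def
proof (intro conjI allI)
  fix x y
  show "rot (alb_add x y) = alb_add (rot x) (rot y)"
    by (cases x, cases y) (simp add: alb_add_simp)
next
  fix s x
  show "rot (alb_smul C s x) = alb_smul C s (rot x)"
    by (cases x) (simp add: alb_smul_simp)
qed

lemma rot_inv_linear: "alb_linear C rot_inv"
  unfolding alb_linear_def
proof (intro conjI allI)
  fix x y
  show "rot_inv (alb_add x y) = alb_add (rot_inv x) (rot_inv y)"
    by (cases x, cases y) (simp add: alb_add_simp)
next
  fix s x
  show "rot_inv (alb_smul C s x) = alb_smul C s (rot_inv x)"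
    by (cases x) (simp add: alb_smul_simp)
qed

lemma linear_comp: "alb_linear C f \<Longrightarrow> alb_linear C g \<Longrightarrow> alb_linear C (f \<circ> g)"
  unfolding alb_linear_def comp_def by (simp del: split_paired_All)

lemma bij_rot: "bij rot" by (rule o_bij[of rot_inv]) (auto simp: fun_eq_iff)
lemma bij_rot_inv: "bij rot_inv" by (rule o_bij[of rot]) (auto simp: fun_eq_iff)

lemma norm_similarity_comp:
  "norm_similarity p1 p2 p3 f \<Longrightarrow> norm_similarity p1 p2 p3 g \<Longrightarrow> norm_similarity p1 p2 p3 (f \<circ> g)"
  unfolding norm_similarity_def
proof (elim conjE exE, intro conjI)
  fix \<nu> \<mu>
  assume "alb_linear C f" "alb_linear C g" "bij f" "bij g" "\<nu> \<noteq> 0" "\<mu> \<noteq> 0"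
    and f: "\<forall>a. cubic_norm p1 p2 p3 (f a) = \<nu> * cubic_norm p1 p2 p3 a"
    and g: "\<forall>a. cubic_norm p1 p2 p3 (g a) = \<mu> * cubic_norm p1 p2 p3 a"
  show "alb_linear C (f \<circ> g)" by (rule linear_comp) fact+
  show "bij (f \<circ> g)" by (rule bij_comp) fact+
  show "\<exists>\<nu>. \<nu> \<noteq> 0 \<and> (\<forall>a. cubic_norm p1 p2 p3 ((f \<circ> g) a) = \<nu> * cubic_norm p1 p2 p3 a)"
    using f g \<open>\<nu> \<noteq> 0\<close> \<open>\<mu> \<noteq> 0\<close> by (intro exI[of _ "\<nu> * \<mu>"]) (simp del: split_paired_All)
qed

lemma norm_similarity_rot:
  assumes "norm_similarity p2 p3 p1 h" shows "norm_similarity p1 p2 p3 (rot_inv \<circ> h \<circ> rot)"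
  using assms unfolding norm_similarity_def
proof (elim conjE exE, intro conjI)
  fix \<nu> assume "alb_linear C h" "bij h" "\<nu> \<noteq> 0"
    and n: "\<forall>a. cubic_norm p2 p3 p1 (h a) = \<nu> * cubic_norm p2 p3 p1 a"
  show "alb_linear C (rot_inv \<circ> h \<circ> rot)"
    by (intro linear_comp rot_linear rot_inv_linear) fact
  show "bij (rot_inv \<circ> h \<circ> rot)" by (intro bij_comp bij_rot bij_rot_inv) fact
  show "\<exists>\<nu>. \<nu> \<noteq> 0 \<and> (\<forall>a. cubic_norm p1 p2 p3 ((rot_inv \<circ> h \<circ> rot) a) = \<nu> * cubic_norm p1 p2 p3 a)"
    using n \<open>\<nu> \<noteq> 0\<close> by (intro exI[of _ \<nu>])
      (simp add: cubic_norm_rot_inv cubic_norm_rot[of p1 p2 p3] del: split_paired_All)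
qed

(* Elementary transvections.  They preserve the norm exactly, and conjugating E01 and E02 by
   rot gives the transvections E12, E20, E10, E21 for the other pairs of indices. *)

fun E01 :: "'k \<Rightarrow> 'k \<Rightarrow> 'k \<Rightarrow> 'c \<Rightarrow> ('k,'c) alb \<Rightarrow> ('k,'c) alb" where
  "E01 p1 p2 p3 s (a1,a2,a3,c1,c2,c3) =
     (a1 + p3 * pl s c3 + p3 * a2 * nn s, a2, a3, c1,
      c2 + sm (p1*p3) (mul (cj c1) (cj s)), c3 + sm a2 s)"

fun E02 :: "'k \<Rightarrow> 'k \<Rightarrow> 'k \<Rightarrow> 'c \<Rightarrow> ('k,'c) alb \<Rightarrow> ('k,'c) alb" where
  "E02 p1 p2 p3 s (a1,a2,a3,c1,c2,c3) =
     (a1 + tr (mul s c2) + p1 * p3 * a3 * nn s, a2, a3, c1,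
      c2 + sm (p1*p3*a3) (cj s), c3 + sm p1 (mul s (cj c1)))"

lemma E01_norm:
  assumes p: "p1*p2*p3 = 1"
  shows "cubic_norm p1 p2 p3 (E01 p1 p2 p3 s x) = cubic_norm p1 p2 p3 x"
proof -
  obtain a1 a2 a3 c1 c2 c3 where u: "x = (a1,a2,a3,c1,c2,c3)" by (cases x) auto
  have h1: "mul c1 (mul (cj c1) (cj s)) = sm (nn c1) (cj s)" by (rule mul_cj_mul)
  have h2: "tr (mul c3 (cj s)) = pl c3 s" by (simp add: pl_eq_tr_mul_cj)
  have h2': "tr (mul s (cj s)) = 2 * nn s" by (rule tr_mul_cj_self)
  have h4: "pl c2 (mul (cj c1) (cj s)) = tr (mul s (mul c1 c2))"
  proof -
    have "pl c2 (mul (cj c1) (cj s)) = pl c2 (cj (mul s c1))" by (simp add: cj_mul)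
    also have "\<dots> = tr (mul c2 (mul s c1))" by (simp add: pl_eq_tr_mul_cj)
    also have "\<dots> = tr (mul s (mul c1 c2))" by (rule tr_cyc)
    finally show ?thesis .
  qed
  have h5: "nn (mul (cj c1) (cj s)) = nn c1 * nn s" by (simp add: nn_mul nn_cj)
  have h6: "pl s c3 = pl c3 s" by (rule pl_sym)
  show ?thesis unfolding u E01.simps cubic_norm.simps
    apply (simp add: mul_add_left mul_add_right mul_sm_left mul_sm_right tr_add tr_sm nn_add nn_sm
        pl_add_left pl_add_right pl_sm_left pl_sm_right h1 h2 h2' h4 h5 h6 power2_eq_square)
    using p by algebra
qed

lemma E02_norm:
  assumes p: "p1*p2*p3 = 1"
  shows "cubic_norm p1 p2 p3 (E02 p1 p2 p3 s x) = cubic_norm p1 p2 p3 x"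
proof -
  obtain a1 a2 a3 c1 c2 c3 where u: "x = (a1,a2,a3,c1,c2,c3)" by (cases x) auto
  have h1: "tr (mul (mul s (cj c1)) (mul c1 c2)) = nn c1 * tr (mul s c2)"
    by (simp add: tr_assoc[symmetric] mul_mul_cj' mul_sm_left tr_sm)
  have h2: "tr (mul (mul s (cj c1)) (mul c1 (cj s))) = 2 * nn c1 * nn s"
    by (simp add: tr_assoc[symmetric] mul_mul_cj' mul_sm_left tr_sm tr_mul_cj_self)
  have h3: "pl c3 (mul s (cj c1)) = tr (mul c3 (mul c1 (cj s)))"
    by (simp add: pl_eq_tr_mul_cj cj_mul)
  have h4: "pl c2 (cj s) = tr (mul s c2)"
    by (simp add: pl_eq_tr_mul_cj tr_mul_comm)
  have h5: "nn (mul s (cj c1)) = nn s * nn c1" by (simp add: nn_mul nn_cj)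
  show ?thesis unfolding u E02.simps cubic_norm.simps
    apply (simp add: mul_add_left mul_add_right mul_sm_left mul_sm_right tr_add tr_sm nn_add nn_sm nn_cj
        pl_add_left pl_add_right pl_sm_left pl_sm_right h1 h2 h3 h4 h5 power2_eq_square)
    using p by algebra
qed

lemma E01_linear: "alb_linear C (E01 p1 p2 p3 s)"
  unfolding alb_linear_def
proof (intro conjI allI)
  fix x y
  show "E01 p1 p2 p3 s (alb_add x y) = alb_add (E01 p1 p2 p3 s x) (E01 p1 p2 p3 s y)"
    by (cases x, cases y) (simp add: alb_add_simp pl_add_right cj_add mul_add_left
        scale_left_distrib scale_right_distrib algebra_simps)
next
  fix k x
  show "E01 p1 p2 p3 s (alb_smul C k x) = alb_smul C k (E01 p1 p2 p3 s x)"
    by (cases x) (simp add: alb_smul_simp pl_sm_right cj_sm mul_sm_left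
        scale_right_distrib algebra_simps)
qed

lemma E02_linear: "alb_linear C (E02 p1 p2 p3 s)"
  unfolding alb_linear_def
proof (intro conjI allI)
  fix x y
  show "E02 p1 p2 p3 s (alb_add x y) = alb_add (E02 p1 p2 p3 s x) (E02 p1 p2 p3 s y)"
    by (cases x, cases y) (simp add: alb_add_simp tr_add mul_add_right cj_add mul_add_left
        scale_left_distrib scale_right_distrib algebra_simps)
next
  fix k x
  show "E02 p1 p2 p3 s (alb_smul C k x) = alb_smul C k (E02 p1 p2 p3 s x)"
    by (cases x) (simp add: alb_smul_simp tr_sm cj_sm mul_sm_left mul_sm_right
        scale_right_distrib algebra_simps)
qed

lemma E01_inv: "E01 p1 p2 p3 (-s) (E01 p1 p2 p3 s x) = x"
  by (cases x) (simp add: cj_neg pl_add_right pl_sm_right pl_self algebra_simps)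

lemma E02_inv: "E02 p1 p2 p3 (-s) (E02 p1 p2 p3 s x) = x"
  by (cases x) (simp add: cj_neg mul_add_right mul_sm_right tr_add tr_diff tr_sm tr_mul_cj_self algebra_simps)

lemma E01_bij: "bij (E01 p1 p2 p3 s)"
proof (rule o_bij[of "E01 p1 p2 p3 (-s)"])
  show "E01 p1 p2 p3 (-s) \<circ> E01 p1 p2 p3 s = id" by (rule ext) (simp add: E01_inv)
  show "E01 p1 p2 p3 s \<circ> E01 p1 p2 p3 (-s) = id"
    by (rule ext) (use E01_inv[of p1 p2 p3 "-s"] in simp)
qed

lemma E02_bij: "bij (E02 p1 p2 p3 s)"
proof (rule o_bij[of "E02 p1 p2 p3 (-s)"])
  show "E02 p1 p2 p3 (-s) \<circ> E02 p1 p2 p3 s = id" by (rule ext) (simp add: E02_inv)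
  show "E02 p1 p2 p3 s \<circ> E02 p1 p2 p3 (-s) = id"
    by (rule ext) (use E02_inv[of p1 p2 p3 "-s"] in simp)
qed

lemma E01_norm_similarity: "p1*p2*p3 = 1 \<Longrightarrow> norm_similarity p1 p2 p3 (E01 p1 p2 p3 s)"
  unfolding norm_similarity_def
  by (intro conjI exI[of _ 1]) (simp_all add: E01_linear E01_bij E01_norm del: split_paired_All)

lemma E02_norm_similarity: "p1*p2*p3 = 1 \<Longrightarrow> norm_similarity p1 p2 p3 (E02 p1 p2 p3 s)"
  unfolding norm_similarity_def
  by (intro conjI exI[of _ 1]) (simp_all add: E02_linear E02_bij E02_norm del: split_paired_All)

definition "E12 p1 p2 p3 s = rot_inv \<circ> E01 p2 p3 p1 s \<circ> rot"
definition "E20 p1 p2 p3 s = rot_inv \<circ> E12 p2 p3 p1 s \<circ> rot"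
definition "E10 p1 p2 p3 s = rot_inv \<circ> E02 p2 p3 p1 s \<circ> rot"
definition "E21 p1 p2 p3 s = rot_inv \<circ> E10 p2 p3 p1 s \<circ> rot"

lemma param_prod_rotate: "p1*p2*p3 = 1 \<Longrightarrow> p2*p3*p1 = (1::'k)" by (simp add: ac_simps)

lemma E12_norm_similarity: "p1*p2*p3 = 1 \<Longrightarrow> norm_similarity p1 p2 p3 (E12 p1 p2 p3 s)"
  unfolding E12_def by (rule norm_similarity_rot, rule E01_norm_similarity, erule param_prod_rotate)
lemma E20_norm_similarity: "p1*p2*p3 = 1 \<Longrightarrow> norm_similarity p1 p2 p3 (E20 p1 p2 p3 s)"
  unfolding E20_def by (rule norm_similarity_rot, rule E12_norm_similarity, erule param_prod_rotate)
lemma E10_norm_similarity: "p1*p2*p3 = 1 \<Longrightarrow> norm_similarity p1 p2 p3 (E10 p1 p2 p3 s)"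
  unfolding E10_def by (rule norm_similarity_rot, rule E02_norm_similarity, erule param_prod_rotate)
lemma E21_norm_similarity: "p1*p2*p3 = 1 \<Longrightarrow> norm_similarity p1 p2 p3 (E21 p1 p2 p3 s)"
  unfolding E21_def by (rule norm_similarity_rot, rule E10_norm_similarity, erule param_prod_rotate)

lemma E12_simp: "E12 p1 p2 p3 s (a1,a2,a3,c1,c2,c3) =
   (a1, a2 + p1 * pl s c1 + p1 * a3 * nn s, a3, c1 + sm a3 s, c2, c3 + sm (p2*p1) (mul (cj c2) (cj s)))"
  by (simp add: E12_def)
lemma E20_simp: "E20 p1 p2 p3 s (a1,a2,a3,c1,c2,c3) =
   (a1, a2, a3 + p2 * pl s c2 + p2 * a1 * nn s, c1 + sm (p3*p2) (mul (cj c3) (cj s)), c2 + sm a1 s, c3)"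
  by (simp add: E20_def E12_def)
lemma E10_simp: "E10 p1 p2 p3 s (a1,a2,a3,c1,c2,c3) =
   (a1, a2 + tr (mul s c3) + p2 * p1 * a1 * nn s, a3, c1 + sm p2 (mul s (cj c2)), c2, c3 + sm (p2*p1*a1) (cj s))"
  by (simp add: E10_def)
lemma E21_simp: "E21 p1 p2 p3 s (a1,a2,a3,c1,c2,c3) =
   (a1, a2, a3 + tr (mul s c1) + p3 * p2 * a2 * nn s, c1 + sm (p3*p2*a2) (cj s), c2 + sm p3 (mul s (cj c3)), c3)"
  by (simp add: E21_def E10_def)

definition rank_le_one :: "'k \<Rightarrow> 'k \<Rightarrow> 'k \<Rightarrow> ('k,'c) alb \<Rightarrow> bool" where
  "rank_le_one p1 p2 p3 u \<longleftrightarrow> sharp p1 p2 p3 u = alb_zero"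

lemma rank_le_one_norm_deriv: "rank_le_one p1 p2 p3 u \<Longrightarrow> norm_deriv p1 p2 p3 u y = 0"
  by (cases y) (simp add: rank_le_one_def norm_deriv_def alb_zero_def)

lemma rank_le_one_coords:
  assumes "rank_le_one p1 p2 p3 (a1,a2,a3,c1,c2,c3)"
  shows "a2*a3 - p1*nn c1 = 0" "a1*a3 - p2*nn c2 = 0" "a1*a2 - p3*nn c3 = 0"
    "sm (p2*p3) (cj (mul c2 c3)) - sm a1 c1 = 0"
    "sm (p1*p3) (cj (mul c3 c1)) - sm a2 c2 = 0"
    "sm (p1*p2) (cj (mul c1 c2)) - sm a3 c3 = 0"
  using assms unfolding rank_le_one_def alb_zero_def by simp_all

lemma alb_smul_smul: "alb_smul C a (alb_smul C b x) = alb_smul C (a * b) x"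
  by (cases x) (simp add: alb_smul_simp)

lemma alb_smul_one: "alb_smul C 1 x = x"
  by (cases x) (simp add: alb_smul_simp)

lemma alb_add_smul: "alb_add (alb_smul C a x) (alb_smul C b x) = alb_smul C (a + b) x"
  by (cases x) (simp add: alb_smul_simp alb_add_simp algebra_simps scale_left_distrib)

lemma cubic_norm3_linear_similarity:
  assumes lin: "alb_linear C h" and n: "\<And>a. cubic_norm p1 p2 p3 (h a) = \<nu> * cubic_norm p1 p2 p3 a"
  shows "cubic_norm3 p1 p2 p3 (h a) (h b) (h c) = \<nu> * cubic_norm3 p1 p2 p3 a b c"
proof -
  have add: "\<And>x y. h (alb_add x y) = alb_add (h x) (h y)" using lin unfolding alb_linear_def by blast
  show ?thesis unfolding cubic_norm3_def add[symmetric] n by (simp add: algebra_simps)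
qed

lemma norm_similarity_cubic_norm3:
  assumes "norm_similarity p1 p2 p3 h"
  shows "\<exists>\<nu>. \<nu> \<noteq> 0 \<and>
    (\<forall>a b c. cubic_norm3 p1 p2 p3 (h a) (h b) (h c) = \<nu> * cubic_norm3 p1 p2 p3 a b c)"
  using assms cubic_norm3_linear_similarity unfolding norm_similarity_def by blast

end

section \<open>Jordan product, rank-one elements and idempotents\<close>

locale composition_algebra_char_ne_2 = composition_algebra C
  for C :: "('k::field, 'c::ab_group_add) kalg" +
  assumes two_neq_zero: "(2::'k) \<noteq> 0"
begin

fun jordan_mul :: "'k \<Rightarrow> 'k \<Rightarrow> 'k \<Rightarrow> ('k,'c) alb \<Rightarrow> ('k,'c) alb \<Rightarrow> ('k,'c) alb" where
  "jordan_mul p1 p2 p3 (a1,a2,a3,c1,c2,c3) (b1,b2,b3,d1,d2,d3) =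
    (a1*b1 + inverse 2 * (p3 * pl c3 d3 + p2 * pl c2 d2),
     a2*b2 + inverse 2 * (p3 * pl c3 d3 + p1 * pl c1 d1),
     a3*b3 + inverse 2 * (p2 * pl c2 d2 + p1 * pl c1 d1),
     sm (inverse 2) (sm (a2+a3) d1 + sm (b2+b3) c1 + sm (p2*p3) (mul (cj c3) (cj d2) + mul (cj d3) (cj c2))),
     sm (inverse 2) (sm (a1+a3) d2 + sm (b1+b3) c2 + sm (p1*p3) (mul (cj c1) (cj d3) + mul (cj d1) (cj c3))),
     sm (inverse 2) (sm (a1+a2) d3 + sm (b1+b2) c3 + sm (p1*p2) (mul (cj c2) (cj d1) + mul (cj d2) (cj c1))))"

lemma sum_lessThan_3: "(\<Sum>k<(3::nat). f k) = f 0 + f 1 + (f 2 :: 'x::comm_monoid_add)"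
  by (simp add: eval_nat_numeral lessThan_Suc add_ac)

lemma albmat_simps:
  "albmat C (g1,g2,g3) (a1,a2,a3,c1,c2,c3) 0 0 = sm a1 one"
  "albmat C (g1,g2,g3) (a1,a2,a3,c1,c2,c3) 0 1 = c3"
  "albmat C (g1,g2,g3) (a1,a2,a3,c1,c2,c3) 0 2 = sm (inverse g1 * g3) (cj c2)"
  "albmat C (g1,g2,g3) (a1,a2,a3,c1,c2,c3) 1 0 = sm (inverse g2 * g1) (cj c3)"
  "albmat C (g1,g2,g3) (a1,a2,a3,c1,c2,c3) 1 1 = sm a2 one"
  "albmat C (g1,g2,g3) (a1,a2,a3,c1,c2,c3) 1 2 = c1"
  "albmat C (g1,g2,g3) (a1,a2,a3,c1,c2,c3) 2 0 = c2"
  "albmat C (g1,g2,g3) (a1,a2,a3,c1,c2,c3) 2 1 = sm (inverse g3 * g2) (cj c1)"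
  "albmat C (g1,g2,g3) (a1,a2,a3,c1,c2,c3) 2 2 = sm a3 one"
  by (simp_all add: albmat_def)

lemmas pl_expand = one_mul mul_one pl_one_left pl_add_left pl_diff_left pl_sm_left pl_one_sm mul_sm_left mul_sm_right
   mul_sm_one_left mul_sm_one_right scale_right_distrib

lemma numeral_powers_of_two_neq_zero: "(4::'k) \<noteq> 0" "(8::'k) \<noteq> 0" "(16::'k) \<noteq> 0"
  using two_neq_zero mult_eq_0_iff[of "2::'k" 2] mult_eq_0_iff[of "2::'k" 4] mult_eq_0_iff[of "2::'k" 8]
  by simp_all

lemma jmat_albmat_00:
  assumes "inverse g3 * g2 = p1" "inverse g1 * g3 = p2" "inverse g2 * g1 = p3"
  shows "jmat C (albmat C (g1,g2,g3) (a1,a2,a3,c1,c2,c3)) (albmat C (g1,g2,g3) (b1,b2,b3,d1,d2,d3)) 0 0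
   = sm (a1*b1 + inverse 2 * (p3 * pl c3 d3 + p2 * pl c2 d2)) one"
  unfolding jmat_def sum_lessThan_3 albmat_simps assms
  apply (simp only: mul_sm_one_left mul_sm_one_right mul_sm_left mul_sm_right)
  apply (rule pl_ext)
  apply (simp add: pl_expand pl_mul_cj_swap[of d3 c3] pl_cj_mul_swap[of d2 c2])
  using two_neq_zero numeral_powers_of_two_neq_zero by (simp add: field_simps)

lemma jmat_albmat_11:
  assumes "inverse g3 * g2 = p1" "inverse g1 * g3 = p2" "inverse g2 * g1 = p3"
  shows "jmat C (albmat C (g1,g2,g3) (a1,a2,a3,c1,c2,c3)) (albmat C (g1,g2,g3) (b1,b2,b3,d1,d2,d3)) 1 1
   = sm (a2*b2 + inverse 2 * (p3 * pl c3 d3 + p1 * pl c1 d1)) one"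
  unfolding jmat_def sum_lessThan_3 albmat_simps assms
  apply (simp only: mul_sm_one_left mul_sm_one_right mul_sm_left mul_sm_right)
  apply (rule pl_ext)
  apply (simp add: pl_expand pl_cj_mul_swap[of d3 c3] pl_mul_cj_swap[of d1 c1])
  using two_neq_zero numeral_powers_of_two_neq_zero by (simp add: field_simps)

lemma jmat_albmat_22:
  assumes "inverse g3 * g2 = p1" "inverse g1 * g3 = p2" "inverse g2 * g1 = p3"
  shows "jmat C (albmat C (g1,g2,g3) (a1,a2,a3,c1,c2,c3)) (albmat C (g1,g2,g3) (b1,b2,b3,d1,d2,d3)) 2 2
   = sm (a3*b3 + inverse 2 * (p2 * pl c2 d2 + p1 * pl c1 d1)) one"
  unfolding jmat_def sum_lessThan_3 albmat_simps assms
  apply (simp only: mul_sm_one_left mul_sm_one_right mul_sm_left mul_sm_right)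
  apply (rule pl_ext)
  apply (simp add: pl_expand pl_mul_cj_swap[of d2 c2] pl_cj_mul_swap[of d1 c1])
  using two_neq_zero numeral_powers_of_two_neq_zero by (simp add: field_simps)

lemma jmat_albmat_12:
  assumes "inverse g3 * g2 = p1" "inverse g1 * g3 = p2" "inverse g2 * g1 = p3"
  shows "jmat C (albmat C (g1,g2,g3) (a1,a2,a3,c1,c2,c3)) (albmat C (g1,g2,g3) (b1,b2,b3,d1,d2,d3)) 1 2
   = sm (inverse 2) (sm (a2+a3) d1 + sm (b2+b3) c1 + sm (p2*p3) (mul (cj c3) (cj d2) + mul (cj d3) (cj c2)))"
  unfolding jmat_def sum_lessThan_3 albmat_simps assms
  apply (simp only: mul_sm_one_left mul_sm_one_right mul_sm_left mul_sm_right)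
  apply (rule pl_ext)
  apply (simp add: pl_expand)
  using two_neq_zero numeral_powers_of_two_neq_zero by (simp add: field_simps)

lemma jmat_albmat_20:
  assumes "inverse g3 * g2 = p1" "inverse g1 * g3 = p2" "inverse g2 * g1 = p3"
  shows "jmat C (albmat C (g1,g2,g3) (a1,a2,a3,c1,c2,c3)) (albmat C (g1,g2,g3) (b1,b2,b3,d1,d2,d3)) 2 0
   = sm (inverse 2) (sm (a1+a3) d2 + sm (b1+b3) c2 + sm (p1*p3) (mul (cj c1) (cj d3) + mul (cj d1) (cj c3)))"
  unfolding jmat_def sum_lessThan_3 albmat_simps assms
  apply (simp only: mul_sm_one_left mul_sm_one_right mul_sm_left mul_sm_right)
  apply (rule pl_ext)
  apply (simp add: pl_expand)
  using two_neq_zero numeral_powers_of_two_neq_zero by (simp add: field_simps)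

lemma jmat_albmat_01:
  assumes "inverse g3 * g2 = p1" "inverse g1 * g3 = p2" "inverse g2 * g1 = p3"
  shows "jmat C (albmat C (g1,g2,g3) (a1,a2,a3,c1,c2,c3)) (albmat C (g1,g2,g3) (b1,b2,b3,d1,d2,d3)) 0 1
   = sm (inverse 2) (sm (a1+a2) d3 + sm (b1+b2) c3 + sm (p1*p2) (mul (cj c2) (cj d1) + mul (cj d2) (cj c1)))"
  unfolding jmat_def sum_lessThan_3 albmat_simps assms
  apply (simp only: mul_sm_one_left mul_sm_one_right mul_sm_left mul_sm_right)
  apply (rule pl_ext)
  apply (simp add: pl_expand)
  using two_neq_zero numeral_powers_of_two_neq_zero by (simp add: field_simps)

lemma is_jprod_jordan_mul:
  assumes j: "is_jprod C (g1,g2,g3) x y z"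
  shows "z = jordan_mul (inverse g3 * g2) (inverse g1 * g3) (inverse g2 * g1) x y"
proof -
  obtain a1 a2 a3 c1 c2 c3 where x: "x = (a1,a2,a3,c1,c2,c3)" by (cases x) auto
  obtain b1 b2 b3 d1 d2 d3 where y: "y = (b1,b2,b3,d1,d2,d3)" by (cases y) auto
  obtain z1 z2 z3 e1 e2 e3 where z: "z = (z1,z2,z3,e1,e2,e3)" by (cases z) auto
  have J: "albmat C (g1,g2,g3) z i j = jmat C (albmat C (g1,g2,g3) x) (albmat C (g1,g2,g3) y) i j"
    if "i < 3" "j < 3" for i j using j that unfolding is_jprod_def by blast
  note R = jmat_albmat_00[OF refl refl refl] jmat_albmat_11[OF refl refl refl] jmat_albmat_22[OF refl refl refl]
     jmat_albmat_12[OF refl refl refl] jmat_albmat_20[OF refl refl refl] jmat_albmat_01[OF refl refl refl]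
  have "sm z1 one = sm (a1*b1 + inverse 2 * (inverse g2 * g1 * pl c3 d3 + inverse g1 * g3 * pl c2 d2)) one"
    using J[of 0 0] unfolding x y z R albmat_simps by simp
  moreover have "sm z2 one = sm (a2*b2 + inverse 2 * (inverse g2 * g1 * pl c3 d3 + inverse g3 * g2 * pl c1 d1)) one"
    using J[of 1 1] unfolding x y z R albmat_simps by simp
  moreover have "sm z3 one = sm (a3*b3 + inverse 2 * (inverse g1 * g3 * pl c2 d2 + inverse g3 * g2 * pl c1 d1)) one"
    using J[of 2 2] unfolding x y z R albmat_simps by simp
  moreover have "e1 = sm (inverse 2) (sm (a2+a3) d1 + sm (b2+b3) c1 + sm (inverse g1 * g3 * (inverse g2 * g1)) (mul (cj c3) (cj d2) + mul (cj d3) (cj c2)))"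
    using J[of 1 2] unfolding x y z R albmat_simps by simp
  moreover have "e2 = sm (inverse 2) (sm (a1+a3) d2 + sm (b1+b3) c2 + sm (inverse g3 * g2 * (inverse g2 * g1)) (mul (cj c1) (cj d3) + mul (cj d1) (cj c3)))"
    using J[of 2 0] unfolding x y z R albmat_simps by simp
  moreover have "e3 = sm (inverse 2) (sm (a1+a2) d3 + sm (b1+b2) c3 + sm (inverse g3 * g2 * (inverse g1 * g3)) (mul (cj c2) (cj d1) + mul (cj d2) (cj c1)))"
    using J[of 0 1] unfolding x y z R albmat_simps by simp
  ultimately show ?thesis unfolding x y z jordan_mul.simps sm_one_eq_iff by simp
qed

lemma jordan_mul_one: "jordan_mul p1 p2 p3 alb_one x = x"
proof -
  obtain a1 a2 a3 c1 c2 c3 where x: "x = (a1,a2,a3,c1,c2,c3)" by (cases x) auto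
  show ?thesis unfolding x alb_one_def jordan_mul.simps using two_neq_zero by simp
qed

lemma jordan_mul_sharp_self:
  assumes p: "p1*p2*p3 = 1"
  shows "jordan_mul p1 p2 p3 (sharp p1 p2 p3 x) x =
    (cubic_norm p1 p2 p3 x, cubic_norm p1 p2 p3 x, cubic_norm p1 p2 p3 x, 0, 0, 0)"
proof -
  obtain a1 a2 a3 c1 c2 c3 where x: "x = (a1,a2,a3,c1,c2,c3)" by (cases x) auto
  have t1: "tr (mul c2 (mul c3 c1)) = tr (mul c3 (mul c1 c2))" by (rule tr_cyc)
  have t2: "tr (mul c1 (mul c2 c3)) = tr (mul c3 (mul c1 c2))" by (rule tr_cyc[symmetric])
  have pp: "p1*(p2*(p3*X)) = X" for X using p by (simp add: mult.assoc[symmetric])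
  have E1: "a1 * (a2*a3 - p1*nn c1) + inverse 2 * (p3 * pl (sm (p1*p2) (cj (mul c1 c2)) - sm a3 c3) c3
      + p2 * pl (sm (p1*p3) (cj (mul c3 c1)) - sm a2 c2) c2) = cubic_norm p1 p2 p3 x"
    unfolding x cubic_norm.simps using two_neq_zero
    by (simp add: pl_diff_left pl_sm_left pl_cj_mul t1 t2 pl_self field_simps pp)
  have E2: "a2 * (a1*a3 - p2*nn c2) + inverse 2 * (p3 * pl (sm (p1*p2) (cj (mul c1 c2)) - sm a3 c3) c3
      + p1 * pl (sm (p2*p3) (cj (mul c2 c3)) - sm a1 c1) c1) = cubic_norm p1 p2 p3 x"
    unfolding x cubic_norm.simps using two_neq_zero
    by (simp add: pl_diff_left pl_sm_left pl_cj_mul t1 t2 pl_self field_simps pp)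
  have E3: "a3 * (a1*a2 - p3*nn c3) + inverse 2 * (p2 * pl (sm (p1*p3) (cj (mul c3 c1)) - sm a2 c2) c2
      + p1 * pl (sm (p2*p3) (cj (mul c2 c3)) - sm a1 c1) c1) = cubic_norm p1 p2 p3 x"
    unfolding x cubic_norm.simps using two_neq_zero
    by (simp add: pl_diff_left pl_sm_left pl_cj_mul t1 t2 pl_self field_simps pp)
  note cs = cj_diff cj_sm cj_cj cj_mul mul_diff_left mul_diff_right mul_sm_left mul_sm_right mul_mul_cj cj_mul_mul
  have F1: "sm (inverse 2) (sm ((a1*a2 - p3*nn c3) + (a1*a3 - p2*nn c2)) c1 + sm (a2+a3) (sm (p2*p3) (cj (mul c2 c3)) - sm a1 c1)
      + sm (p2*p3) (mul (cj (sm (p1*p2) (cj (mul c1 c2)) - sm a3 c3)) (cj c2) + mul (cj c3) (cj (sm (p1*p3) (cj (mul c3 c1)) - sm a2 c2)))) = 0"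
    apply (rule pl_ext)
    apply (simp add: cs pl_expand pl_diff_left)
    using two_neq_zero numeral_powers_of_two_neq_zero apply (simp add: field_simps)
    using p by algebra
  have F2: "sm (inverse 2) (sm ((a2*a3 - p1*nn c1) + (a1*a2 - p3*nn c3)) c2 + sm (a1+a3) (sm (p1*p3) (cj (mul c3 c1)) - sm a2 c2)
      + sm (p1*p3) (mul (cj (sm (p2*p3) (cj (mul c2 c3)) - sm a1 c1)) (cj c3) + mul (cj c1) (cj (sm (p1*p2) (cj (mul c1 c2)) - sm a3 c3)))) = 0"
    apply (rule pl_ext)
    apply (simp add: cs pl_expand pl_diff_left)
    using two_neq_zero numeral_powers_of_two_neq_zero apply (simp add: field_simps)
    using p by algebra
  have F3: "sm (inverse 2) (sm ((a2*a3 - p1*nn c1) + (a1*a3 - p2*nn c2)) c3 + sm (a1+a2) (sm (p1*p2) (cj (mul c1 c2)) - sm a3 c3)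
      + sm (p1*p2) (mul (cj (sm (p1*p3) (cj (mul c3 c1)) - sm a2 c2)) (cj c1) + mul (cj c2) (cj (sm (p2*p3) (cj (mul c2 c3)) - sm a1 c1)))) = 0"
    apply (rule pl_ext)
    apply (simp add: cs pl_expand pl_diff_left)
    using two_neq_zero numeral_powers_of_two_neq_zero apply (simp add: field_simps)
    using p by algebra
  show ?thesis unfolding x sharp.simps jordan_mul.simps
    using E1 E2 E3 F1 F2 F3 unfolding x by (simp add: algebra_simps del: cubic_norm.simps)
qed

lemma jordan_mul_linear_left:
  "jordan_mul p1 p2 p3 (alb_add (alb_smul C k x) (alb_smul C l y)) z =
   alb_add (alb_smul C k (jordan_mul p1 p2 p3 x z)) (alb_smul C l (jordan_mul p1 p2 p3 y z))"
proof -
  obtain a1 a2 a3 c1 c2 c3 where x: "x = (a1,a2,a3,c1,c2,c3)" by (cases x) auto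
  obtain b1 b2 b3 d1 d2 d3 where y: "y = (b1,b2,b3,d1,d2,d3)" by (cases y) auto
  obtain e1 e2 e3 f1 f2 f3 where z: "z = (e1,e2,e3,f1,f2,f3)" by (cases z) auto
  note cs = cj_add cj_sm mul_add_left mul_add_right mul_sm_left mul_sm_right pl_expand pl_sm_left pl_add_left
  have o1: "sm (inverse 2) (sm (k * a2 + l * b2 + (k * a3 + l * b3)) f1 + sm (e2 + e3) (sm k c1 + sm l d1) +
      sm (p2 * p3) (mul (cj (sm k c3 + sm l d3)) (cj f2) + mul (cj f3) (cj (sm k c2 + sm l d2)))) =
    sm k (sm (inverse 2) (sm (a2 + a3) f1 + sm (e2 + e3) c1 + sm (p2 * p3) (mul (cj c3) (cj f2) + mul (cj f3) (cj c2)))) +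
    sm l (sm (inverse 2) (sm (b2 + b3) f1 + sm (e2 + e3) d1 + sm (p2 * p3) (mul (cj d3) (cj f2) + mul (cj f3) (cj d2))))"
    by (rule pl_ext) (simp add: cs algebra_simps)
  have o2: "sm (inverse 2) (sm (k * a1 + l * b1 + (k * a3 + l * b3)) f2 + sm (e1 + e3) (sm k c2 + sm l d2) +
      sm (p1 * p3) (mul (cj (sm k c1 + sm l d1)) (cj f3) + mul (cj f1) (cj (sm k c3 + sm l d3)))) =
    sm k (sm (inverse 2) (sm (a1 + a3) f2 + sm (e1 + e3) c2 + sm (p1 * p3) (mul (cj c1) (cj f3) + mul (cj f1) (cj c3)))) +
    sm l (sm (inverse 2) (sm (b1 + b3) f2 + sm (e1 + e3) d2 + sm (p1 * p3) (mul (cj d1) (cj f3) + mul (cj f1) (cj d3))))"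
    by (rule pl_ext) (simp add: cs algebra_simps)
  have o3: "sm (inverse 2) (sm (k * a1 + l * b1 + (k * a2 + l * b2)) f3 + sm (e1 + e2) (sm k c3 + sm l d3) +
      sm (p1 * p2) (mul (cj (sm k c2 + sm l d2)) (cj f1) + mul (cj f2) (cj (sm k c1 + sm l d1)))) =
    sm k (sm (inverse 2) (sm (a1 + a2) f3 + sm (e1 + e2) c3 + sm (p1 * p2) (mul (cj c2) (cj f1) + mul (cj f2) (cj c1)))) +
    sm l (sm (inverse 2) (sm (b1 + b2) f3 + sm (e1 + e2) d3 + sm (p1 * p2) (mul (cj d2) (cj f1) + mul (cj f2) (cj d1))))"
    by (rule pl_ext) (simp add: cs algebra_simps)
  show ?thesis unfolding x y z alb_smul_simp alb_add_simp jordan_mul.simps o1 o2 o3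
    by (simp add: pl_add_left pl_sm_left algebra_simps)
qed

fun alb_trace :: "('k,'c) alb \<Rightarrow> 'k" where
  "alb_trace (a1,a2,a3,c1,c2,c3) = a1 + a2 + a3"

lemma sm_half_double: "sm (inverse 2) (A + A + sm k (M + M)) = A + sm k M"
proof -
  have "A + A + sm k (M + M) = sm 2 (A + sm k M)"
    by (simp only: sm_two scale_right_distrib add_ac)
  then show ?thesis using two_neq_zero by simp
qed

lemma rank_le_one_iff_cubic_norm3:
  assumes p: "p1*p2*p3 = 1"
  shows "rank_le_one p1 p2 p3 u \<longleftrightarrow> (\<forall>y. cubic_norm3 p1 p2 p3 u u y = 0)"
proof
  assume "rank_le_one p1 p2 p3 u"
  then show "\<forall>y. cubic_norm3 p1 p2 p3 u u y = 0"
    unfolding cubic_norm3_eq_norm_deriv[OF p] using rank_le_one_norm_deriv by simp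
next
  assume h: "\<forall>y. cubic_norm3 p1 p2 p3 u u y = 0"
  have q: "norm_deriv p1 p2 p3 u y = 0" for y
  proof -
    from h have "cubic_norm3 p1 p2 p3 u u y = 0" by blast
    with two_neq_zero show ?thesis unfolding cubic_norm3_eq_norm_deriv[OF p] by simp
  qed
  obtain A1 A2 A3 C1 C2 C3 where a: "sharp p1 p2 p3 u = (A1,A2,A3,C1,C2,C3)"
    by (cases "sharp p1 p2 p3 u") auto
  have pz: "p1 \<noteq> 0" "p2 \<noteq> 0" "p3 \<noteq> 0" using p by auto
  have "A1 = 0" using q[of "(1,0,0,0,0,0)"] unfolding norm_deriv_def a by simp
  moreover have "A2 = 0" using q[of "(0,1,0,0,0,0)"] unfolding norm_deriv_def a by simp
  moreover have "A3 = 0" using q[of "(0,0,1,0,0,0)"] unfolding norm_deriv_def a by simp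
  moreover have "C1 = 0"
  proof (rule pl_nondegenerate)
    fix w show "pl C1 w = 0" using q[of "(0,0,0,w,0,0)"] pz unfolding norm_deriv_def a by simp
  qed
  moreover have "C2 = 0"
  proof (rule pl_nondegenerate)
    fix w show "pl C2 w = 0" using q[of "(0,0,0,0,w,0)"] pz unfolding norm_deriv_def a by simp
  qed
  moreover have "C3 = 0"
  proof (rule pl_nondegenerate)
    fix w show "pl C3 w = 0" using q[of "(0,0,0,0,0,w)"] pz unfolding norm_deriv_def a by simp
  qed
  ultimately show "rank_le_one p1 p2 p3 u" using a by (simp add: rank_le_one_def alb_zero_def)
qed

lemma norm_similarity_rank_le_one:
  assumes p: "p1*p2*p3 = 1" and h: "norm_similarity p1 p2 p3 h" and u: "rank_le_one p1 p2 p3 u"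
  shows "rank_le_one p1 p2 p3 (h u)"
proof -
  obtain \<nu> where M: "\<And>a b c. cubic_norm3 p1 p2 p3 (h a) (h b) (h c) = \<nu> * cubic_norm3 p1 p2 p3 a b c"
    using norm_similarity_cubic_norm3[OF h] by blast
  have "surj h" using h unfolding norm_similarity_def bij_def by blast
  show ?thesis unfolding rank_le_one_iff_cubic_norm3[OF p]
  proof
    fix y
    obtain z where z: "y = h z" using \<open>surj h\<close> by (metis surjD)
    have "cubic_norm3 p1 p2 p3 u u z = 0" using u unfolding rank_le_one_iff_cubic_norm3[OF p] by blast
    then show "cubic_norm3 p1 p2 p3 (h u) (h u) y = 0" unfolding z M by simp
  qed
qed

lemma rank_le_one_cubic_norm:
  assumes p: "p1*p2*p3 = 1" and u: "rank_le_one p1 p2 p3 u"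
  shows "cubic_norm p1 p2 p3 u = 0"
proof -
  have "jordan_mul p1 p2 p3 alb_zero u = alb_zero"
    by (cases u) (simp add: alb_zero_def)
  then show ?thesis
    using jordan_mul_sharp_self[OF p, of u] u by (simp add: rank_le_one_def alb_zero_def)
qed

lemma alb_trace_jordan_square:
  "alb_trace (jordan_mul p1 p2 p3 x x) = alb_trace x ^ 2 - 2 * alb_trace (sharp p1 p2 p3 x)"
  using two_neq_zero numeral_powers_of_two_neq_zero
  by (cases x) (simp add: pl_self field_simps power2_eq_square)

lemma idempotent_sharp:
  assumes f: "jordan_mul p1 p2 p3 f f = f"
  shows "sharp p1 p2 p3 f =
    alb_add (alb_smul C (1 - alb_trace f) f) (alb_smul C (alb_trace (sharp p1 p2 p3 f)) alb_one)"
proof -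
  obtain a1 a2 a3 c1 c2 c3 where x: "f = (a1,a2,a3,c1,c2,c3)" by (cases f) auto
  define \<tau> where "\<tau> = a1 + a2 + a3"
  have eqs: "a1*a1 + inverse 2 * (p3 * pl c3 c3 + p2 * pl c2 c2) = a1"
     "a2*a2 + inverse 2 * (p3 * pl c3 c3 + p1 * pl c1 c1) = a2"
     "a3*a3 + inverse 2 * (p2 * pl c2 c2 + p1 * pl c1 c1) = a3"
     "sm (inverse 2) (sm (a2+a3) c1 + sm (a2+a3) c1 + sm (p2*p3) (mul (cj c3) (cj c2) + mul (cj c3) (cj c2))) = c1"
     "sm (inverse 2) (sm (a1+a3) c2 + sm (a1+a3) c2 + sm (p1*p3) (mul (cj c1) (cj c3) + mul (cj c1) (cj c3))) = c2"
     "sm (inverse 2) (sm (a1+a2) c3 + sm (a1+a2) c3 + sm (p1*p2) (mul (cj c2) (cj c1) + mul (cj c2) (cj c1))) = c3"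
    using f unfolding x jordan_mul.simps by simp_all
  have off_diag: "sm (a2+a3) c1 + sm (p2*p3) (mul (cj c3) (cj c2)) = c1"
     "sm (a1+a3) c2 + sm (p1*p3) (mul (cj c1) (cj c3)) = c2"
     "sm (a1+a2) c3 + sm (p1*p2) (mul (cj c2) (cj c1)) = c3"
    using eqs(4-6) by (simp_all only: sm_half_double)
  have half: "inverse 2 * (p * (2 * n) + q * (2 * m)) = p * n + q * m" for p n q m :: 'k
    using two_neq_zero by (simp add: field_simps)
  have "a1*a1 + p3 * nn c3 + p2 * nn c2 = a1" "a2*a2 + p3 * nn c3 + p1 * nn c1 = a2"
    "a3*a3 + p2 * nn c2 + p1 * nn c1 = a3"
    using eqs(1-3) by (simp_all only: pl_self half add.assoc)
  moreover have "sm (p2*p3) (cj (mul c2 c3)) - sm a1 c1 = sm (1 - \<tau>) c1"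
    "sm (p1*p3) (cj (mul c3 c1)) - sm a2 c2 = sm (1 - \<tau>) c2"
    "sm (p1*p2) (cj (mul c1 c2)) - sm a3 c3 = sm (1 - \<tau>) c3"
    using off_diag unfolding \<tau>_def
    by (simp_all add: cj_mul)
      (metis (no_types, lifting) add_diff_cancel_left' scale_left_diff_distrib
        scale_one diff_add_eq_diff_diff_swap diff_diff_eq2)+
  ultimately show ?thesis unfolding x \<tau>_def by (simp add: alb_smul_simp alb_add_simp alb_one_def algebra_simps)
qed

lemma idempotent_trace:
  assumes p: "p1*p2*p3 = 1" and f: "jordan_mul p1 p2 p3 f f = f"
    and ns: "\<nexists>a. f = (a,a,a,0,0,0)"
  shows "alb_trace (sharp p1 p2 p3 f) = alb_trace f - 1"
    and "(alb_trace f - 1) * (alb_trace f - 2) = 0"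
proof -
  define \<tau> where "\<tau> = alb_trace f"
  define s where "s = alb_trace (sharp p1 p2 p3 f)"
  define k where "k = 1 - \<tau> + s"
  have "alb_smul C k f = jordan_mul p1 p2 p3 (sharp p1 p2 p3 f) f"
    by (subst idempotent_sharp[OF f])
      (simp add: jordan_mul_linear_left f jordan_mul_one alb_add_smul k_def \<tau>_def s_def)
  also have "\<dots> = alb_smul C (cubic_norm p1 p2 p3 f) alb_one"
    by (simp add: jordan_mul_sharp_self[OF p] alb_one_def alb_smul_simp)
  finally have kf: "alb_smul C k f = alb_smul C (cubic_norm p1 p2 p3 f) alb_one" .
  have "k = 0"
  proof (rule ccontr)
    assume "k \<noteq> 0"
    then have "f = alb_smul C (inverse k * cubic_norm p1 p2 p3 f) alb_one"
      using arg_cong[OF kf, of "alb_smul C (inverse k)"] by (simp add: alb_smul_smul alb_smul_one)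
    with ns show False by (simp add: alb_one_def alb_smul_simp)
  qed
  then show s: "alb_trace (sharp p1 p2 p3 f) = alb_trace f - 1"
    unfolding k_def \<tau>_def s_def by (simp add: algebra_simps)
  have "\<tau> = \<tau> ^ 2 - 2 * (\<tau> - 1)"
    using alb_trace_jordan_square[of p1 p2 p3 f] s unfolding f \<tau>_def by simp
  then show "(alb_trace f - 1) * (alb_trace f - 2) = 0"
    unfolding \<tau>_def by (simp add: algebra_simps power2_eq_square)
qed

lemma idempotent_trace_one_rank_le_one:
  assumes p: "p1*p2*p3 = 1" and f: "jordan_mul p1 p2 p3 f f = f"
    and ns: "\<nexists>a. f = (a,a,a,0,0,0)" and t: "alb_trace f = 1"
  shows "rank_le_one p1 p2 p3 f"
proof -
  have "alb_trace (sharp p1 p2 p3 f) = 0" using idempotent_trace(1)[OF p f ns] t by simp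
  with idempotent_sharp[OF f] t
  have "sharp p1 p2 p3 f = alb_add (alb_smul C 0 f) (alb_smul C 0 alb_one)" by simp
  then show ?thesis
    by (cases f) (simp add: rank_le_one_def alb_zero_def alb_smul_simp alb_add_simp alb_one_def)
qed

section \<open>Moving a frame of rank-one elements to the diagonal\<close>

lemma cubic_norm3_axis1:
  "cubic_norm3 p1 p2 p3 (l,0,0,0,0,0) (b1,b2,b3,d1,d2,d3) (e1,e2,e3,f1,f2,f3) =
     l * (b2*e3 + b3*e2 - p1 * pl d1 f1)"
  unfolding cubic_norm3_def by (simp add: alb_add_simp nn_add algebra_simps)

lemma add_or_diff_nonzero: "(B::'k) \<noteq> 0 \<Longrightarrow> a + B + D \<noteq> 0 \<or> a + - B + D \<noteq> 0"
proof (rule ccontr)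
  assume B: "B \<noteq> 0" and "\<not> (a + B + D \<noteq> 0 \<or> a + - B + D \<noteq> 0)"
  then have "a + B + D = 0" "a + - B + D = 0" by auto
  then have "2 * B = 0" by (simp add: algebra_simps)
  then show False using B two_neq_zero by simp
qed

lemma E01_fst_nonzero:
  assumes p3: "p3 \<noteq> 0" and nz: "a1 \<noteq> 0 \<or> c3 \<noteq> 0 \<or> a2 \<noteq> 0"
  shows "\<exists>s. fst (E01 p1 p2 p3 s (a1,a2,a3,c1,c2,c3)) \<noteq> 0"
proof -
  consider "a1 \<noteq> 0" | "c3 \<noteq> 0" | "a1 = 0" "c3 = 0" "a2 \<noteq> 0" using nz by blast
  then show ?thesis
  proof cases
    case 1
    then show ?thesis by (intro exI[of _ 0]) simp
  next
    case 2
    then obtain w where "pl w c3 \<noteq> 0" using exists_pl_nonzero by blast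
    then have "a1 + p3 * pl w c3 + p3 * a2 * nn w \<noteq> 0 \<or> a1 + - (p3 * pl w c3) + p3 * a2 * nn w \<noteq> 0"
      by (intro add_or_diff_nonzero) (simp add: p3)
    then show ?thesis
    proof
      assume "a1 + p3 * pl w c3 + p3 * a2 * nn w \<noteq> 0"
      then show ?thesis by (intro exI[of _ w]) simp
    next
      assume "a1 + - (p3 * pl w c3) + p3 * a2 * nn w \<noteq> 0"
      then show ?thesis by (intro exI[of _ "- w"]) simp
    qed
  next
    case 3
    then show ?thesis using p3 by (intro exI[of _ one]) (simp add: nn_one)
  qed
qed

lemma E02_fst_nonzero:
  assumes p: "p1 \<noteq> 0" "p3 \<noteq> 0" and nz: "a1 \<noteq> 0 \<or> c2 \<noteq> 0 \<or> a3 \<noteq> 0"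
  shows "\<exists>s. fst (E02 p1 p2 p3 s (a1,a2,a3,c1,c2,c3)) \<noteq> 0"
proof -
  consider "a1 \<noteq> 0" | "c2 \<noteq> 0" | "a1 = 0" "c2 = 0" "a3 \<noteq> 0" using nz by blast
  then show ?thesis
  proof cases
    case 1
    then show ?thesis by (intro exI[of _ 0]) simp
  next
    case 2
    then obtain w where w: "pl w c2 \<noteq> 0" using exists_pl_nonzero by blast
    have tw: "tr (mul (cj w) c2) = pl w c2" by (simp add: tr_mul)
    have "a1 + pl w c2 + p1 * p3 * a3 * nn (cj w) \<noteq> 0 \<or>
        a1 + - pl w c2 + p1 * p3 * a3 * nn (cj w) \<noteq> 0"
      using w by (rule add_or_diff_nonzero)
    then show ?thesis
    proof
      assume "a1 + pl w c2 + p1 * p3 * a3 * nn (cj w) \<noteq> 0"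
      then show ?thesis by (intro exI[of _ "cj w"]) (simp add: tw)
    next
      assume "a1 + - pl w c2 + p1 * p3 * a3 * nn (cj w) \<noteq> 0"
      then show ?thesis by (intro exI[of _ "- cj w"]) (simp add: tw cj_neg)
    qed
  next
    case 3
    then show ?thesis using p by (intro exI[of _ one]) (simp add: nn_one)
  qed
qed

lemma exists_similarity_fst_nonzero:
  assumes p: "p1*p2*p3 = 1" and nz: "u \<noteq> alb_zero"
  shows "\<exists>h. norm_similarity p1 p2 p3 h \<and> fst (h u) \<noteq> 0"
proof -
  obtain a1 a2 a3 c1 c2 c3 where u: "u = (a1,a2,a3,c1,c2,c3)" by (cases u) auto
  have pz: "p1 \<noteq> 0" "p2 \<noteq> 0" "p3 \<noteq> 0" using p by auto
  consider "a1 \<noteq> 0 \<or> c3 \<noteq> 0 \<or> a2 \<noteq> 0" | "a1 \<noteq> 0 \<or> c2 \<noteq> 0 \<or> a3 \<noteq> 0"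
    | "a1 = 0" "a2 = 0" "a3 = 0" "c2 = 0" "c3 = 0" "c1 \<noteq> 0"
    using nz unfolding u alb_zero_def by blast
  then show ?thesis
  proof cases
    case 1
    then show ?thesis using E01_fst_nonzero[OF pz(3) 1] E01_norm_similarity[OF p] unfolding u by blast
  next
    case 2
    then show ?thesis using E02_fst_nonzero[OF pz(1,3) 2] E02_norm_similarity[OF p] unfolding u by blast
  next
    case 3
    then obtain w where "pl w c1 \<noteq> 0" using exists_pl_nonzero by blast
    then have "p1 * pl w c1 \<noteq> 0" using pz(1) by simp
    then obtain s where s: "fst (E01 p1 p2 p3 s (0, p1 * pl w c1, 0, c1, 0, 0)) \<noteq> 0"
      using E01_fst_nonzero[OF pz(3), where ?a1.0 = 0 and ?c3.0 = 0 and ?a2.0 = "p1 * pl w c1"] by blast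
    have "E12 p1 p2 p3 w u = (0, p1 * pl w c1, 0, c1, 0, 0)" unfolding u using 3 by (simp add: E12_simp)
    with s show ?thesis using E01_norm_similarity[OF p] E12_norm_similarity[OF p]
      by (intro exI[of _ "E01 p1 p2 p3 s \<circ> E12 p1 p2 p3 w"]) (simp add: norm_similarity_comp)
  qed
qed

lemma rank_le_one_to_axis1:
  assumes p: "p1*p2*p3 = 1" and r: "rank_le_one p1 p2 p3 u" and a1: "fst u \<noteq> 0"
  shows "\<exists>h. norm_similarity p1 p2 p3 h \<and> h u = (fst u,0,0,0,0,0)"
proof -
  obtain a1 a2 a3 c1 c2 c3 where u: "u = (a1,a2,a3,c1,c2,c3)" by (cases u) auto
  have pz: "p1 \<noteq> 0" "p2 \<noteq> 0" "p3 \<noteq> 0" using p by auto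
  have a: "a1 \<noteq> 0" using a1 u by simp
  define s where "s = cj (sm (- inverse (p2*p1*a1)) c3)"
  define b2 where "b2 = a2 + tr (mul s c3) + p2 * p1 * a1 * nn s"
  define d1 where "d1 = c1 + sm p2 (mul s (cj c2))"
  have k1: "p2 * p1 * a1 * (inverse p2 * inverse p1 * inverse a1) = 1" using pz a by (simp add: field_simps)
  have "sm (p2*p1*a1) (cj s) = - c3" using pz a k1 unfolding s_def by simp
  then have u1: "E10 p1 p2 p3 s u = (a1, b2, a3, d1, c2, 0)"
    unfolding u E10_simp b2_def d1_def by simp
  define t where "t = sm (- inverse a1) c2"
  define b3 where "b3 = a3 + p2 * pl t c2 + p2 * a1 * nn t"
  have "c2 + sm a1 t = 0" using a unfolding t_def by simp
  then have u2: "E20 p1 p2 p3 t (a1, b2, a3, d1, c2, 0) = (a1, b2, b3, d1, 0, 0)"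
    unfolding E20_simp b3_def by simp
  define h where "h = E20 p1 p2 p3 t \<circ> E10 p1 p2 p3 s"
  have sh: "norm_similarity p1 p2 p3 h" unfolding h_def by (intro norm_similarity_comp E20_norm_similarity E10_norm_similarity p)
  have hu: "h u = (a1, b2, b3, d1, 0, 0)" unfolding h_def using u1 u2 by simp
  have "rank_le_one p1 p2 p3 (a1, b2, b3, d1, 0, 0)" using norm_similarity_rank_le_one[OF p sh r] hu by simp
  \<comment> \<open>once \<open>c2 = c3 = 0\<close>, rank one and \<open>a1 \<noteq> 0\<close> kill all other coordinates\<close>
  note R = rank_le_one_coords[OF this]
  have "b2 = 0" using R(3) a by simp
  moreover have "b3 = 0" using R(2) a by simp
  moreover have "d1 = 0" using R(4) a by (simp add: sm_eq_0_iff)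
  ultimately show ?thesis using sh hu u by (intro exI[of _ h]) simp
qed

lemma exists_similarity_to_axis1:
  assumes p: "p1*p2*p3 = 1" and r: "rank_le_one p1 p2 p3 u" and nz: "u \<noteq> alb_zero"
  shows "\<exists>h l. norm_similarity p1 p2 p3 h \<and> h u = (l,0,0,0,0,0)"
proof -
  obtain h where h: "norm_similarity p1 p2 p3 h" "fst (h u) \<noteq> 0" using exists_similarity_fst_nonzero[OF p nz] by blast
  obtain g where g: "norm_similarity p1 p2 p3 g" "g (h u) = (fst (h u),0,0,0,0,0)"
    using rank_le_one_to_axis1[OF p norm_similarity_rank_le_one[OF p h(1) r] h(2)] by blast
  show ?thesis using g h by (intro exI[of _ "g \<circ> h"] exI[of _ "fst (h u)"]) (simp add: norm_similarity_comp)
qed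

definition fixes_axis1 :: "(('k,'c) alb \<Rightarrow> ('k,'c) alb) \<Rightarrow> bool" where
  "fixes_axis1 h \<longleftrightarrow> (\<forall>k. h (k,0,0,0,0,0) = (k,0,0,0,0,0))"
definition fixes_axis2 :: "(('k,'c) alb \<Rightarrow> ('k,'c) alb) \<Rightarrow> bool" where
  "fixes_axis2 h \<longleftrightarrow> (\<forall>k. h (0,k,0,0,0,0) = (0,k,0,0,0,0))"

lemma fixes_axis1_comp: "fixes_axis1 f \<Longrightarrow> fixes_axis1 g \<Longrightarrow> fixes_axis1 (f \<circ> g)" unfolding fixes_axis1_def by simp
lemma fixes_axis2_comp: "fixes_axis2 f \<Longrightarrow> fixes_axis2 g \<Longrightarrow> fixes_axis2 (f \<circ> g)" unfolding fixes_axis2_def by simp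
lemma fixes_axis1_E12: "fixes_axis1 (E12 p1 p2 p3 s)" unfolding fixes_axis1_def by (simp add: E12_simp)
lemma fixes_axis1_E01: "fixes_axis1 (E01 p1 p2 p3 s)" unfolding fixes_axis1_def by simp
lemma fixes_axis1_E21: "fixes_axis1 (E21 p1 p2 p3 s)" unfolding fixes_axis1_def by (simp add: E21_simp)
lemma fixes_axis1_E02: "fixes_axis1 (E02 p1 p2 p3 s)" unfolding fixes_axis1_def by simp
lemma fixes_axis2_E02: "fixes_axis2 (E02 p1 p2 p3 s)" unfolding fixes_axis2_def by simp
lemma fixes_axis2_E12: "fixes_axis2 (E12 p1 p2 p3 s)" unfolding fixes_axis2_def by (simp add: E12_simp)

lemma snd_nonzero_fixing_axis1:
  assumes p: "p1*p2*p3 = 1" and nz: "b2 \<noteq> 0 \<or> d1 \<noteq> 0 \<or> b3 \<noteq> 0"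
  shows "\<exists>h. norm_similarity p1 p2 p3 h \<and> fixes_axis1 h \<and> fst (snd (h (b1,b2,b3,d1,d2,d3))) \<noteq> 0"
proof -
  have "p1 \<noteq> 0" using p by auto
  then obtain s where "fst (E01 p2 p3 p1 s (b2,b3,b1,d2,d3,d1)) \<noteq> 0"
    using E01_fst_nonzero nz by blast
  then show ?thesis using E12_norm_similarity[OF p] fixes_axis1_E12
    by (intro exI[of _ "E12 p1 p2 p3 s"]) (simp add: E12_simp)
qed

lemma rank_le_one_to_axis2:
  assumes p: "p1*p2*p3 = 1" and r: "rank_le_one p1 p2 p3 v" and b: "fst (snd v) \<noteq> 0"
  shows "\<exists>h. norm_similarity p1 p2 p3 h \<and> fixes_axis1 h \<and> h v = (0,fst (snd v),0,0,0,0)"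
proof -
  obtain b1 b2 b3 d1 d2 d3 where v: "v = (b1,b2,b3,d1,d2,d3)" by (cases v) auto
  have pz: "p1 \<noteq> 0" "p2 \<noteq> 0" "p3 \<noteq> 0" using p by auto
  have b2: "b2 \<noteq> 0" using b v by simp
  define s where "s = sm (- inverse b2) d3"
  define b1' where "b1' = b1 + p3 * pl s d3 + p3 * b2 * nn s"
  define d2' where "d2' = d2 + sm (p1*p3) (mul (cj d1) (cj s))"
  have "d3 + sm b2 s = 0" using b2 unfolding s_def by simp
  then have u1: "E01 p1 p2 p3 s v = (b1', b2, b3, d1, d2', 0)"
    unfolding v E01.simps b1'_def d2'_def by simp
  define t where "t = cj (sm (- inverse (p3*p2*b2)) d1)"
  define b3' where "b3' = b3 + tr (mul t d1) + p3 * p2 * b2 * nn t"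
  have k1: "p3 * p2 * b2 * (inverse p3 * inverse p2 * inverse b2) = 1" using pz b2 by (simp add: field_simps)
  have "d1 + sm (p3*p2*b2) (cj t) = 0" using pz b2 k1 unfolding t_def by simp
  then have u2: "E21 p1 p2 p3 t (b1', b2, b3, d1, d2', 0) = (b1', b2, b3', 0, d2', 0)"
    unfolding E21_simp b3'_def by simp
  define h where "h = E21 p1 p2 p3 t \<circ> E01 p1 p2 p3 s"
  have sh: "norm_similarity p1 p2 p3 h" unfolding h_def by (intro norm_similarity_comp E21_norm_similarity E01_norm_similarity p)
  have fh: "fixes_axis1 h" unfolding h_def by (intro fixes_axis1_comp fixes_axis1_E21 fixes_axis1_E01)
  have hu: "h v = (b1', b2, b3', 0, d2', 0)" unfolding h_def using u1 u2 by simp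
  have "rank_le_one p1 p2 p3 (b1', b2, b3', 0, d2', 0)" using norm_similarity_rank_le_one[OF p sh r] hu by simp
  note R = rank_le_one_coords[OF this]
  have "b1' = 0" using R(3) b2 by simp
  moreover have "b3' = 0" using R(1) b2 by simp
  moreover have "d2' = 0" using R(5) b2 by (simp add: sm_eq_0_iff)
  ultimately show ?thesis using sh fh hu v by (intro exI[of _ h]) simp
qed

lemma rank_le_one_to_axis3:
  assumes p: "p1*p2*p3 = 1" and r: "rank_le_one p1 p2 p3 w" and e: "fst (snd (snd w)) \<noteq> 0"
  shows "\<exists>h. norm_similarity p1 p2 p3 h \<and> fixes_axis1 h \<and> fixes_axis2 h \<and> h w = (0,0,fst (snd (snd w)),0,0,0)"
proof -
  obtain e1 e2 e3 f1 f2 f3 where w: "w = (e1,e2,e3,f1,f2,f3)" by (cases w) auto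
  have pz: "p1 \<noteq> 0" "p2 \<noteq> 0" "p3 \<noteq> 0" using p by auto
  have e3: "e3 \<noteq> 0" using e w by simp
  define s where "s = cj (sm (- inverse (p1*p3*e3)) f2)"
  define e1' where "e1' = e1 + tr (mul s f2) + p1 * p3 * e3 * nn s"
  define f3' where "f3' = f3 + sm p1 (mul s (cj f1))"
  have k1: "p1 * p3 * e3 * (inverse p1 * inverse p3 * inverse e3) = 1" using pz e3 by (simp add: field_simps)
  have "f2 + sm (p1*p3*e3) (cj s) = 0" using pz e3 k1 unfolding s_def by simp
  then have u1: "E02 p1 p2 p3 s w = (e1', e2, e3, f1, 0, f3')"
    unfolding w E02.simps e1'_def f3'_def by simp
  define t where "t = sm (- inverse e3) f1"
  define e2' where "e2' = e2 + p1 * pl t f1 + p1 * e3 * nn t"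
  have "f1 + sm e3 t = 0" using e3 unfolding t_def by simp
  then have u2: "E12 p1 p2 p3 t (e1', e2, e3, f1, 0, f3') = (e1', e2', e3, 0, 0, f3')"
    unfolding E12_simp e2'_def by simp
  define h where "h = E12 p1 p2 p3 t \<circ> E02 p1 p2 p3 s"
  have sh: "norm_similarity p1 p2 p3 h" unfolding h_def by (intro norm_similarity_comp E12_norm_similarity E02_norm_similarity p)
  have fh: "fixes_axis1 h" "fixes_axis2 h" unfolding h_def
    by (intro fixes_axis1_comp fixes_axis1_E12 fixes_axis1_E02,
        intro fixes_axis2_comp fixes_axis2_E12 fixes_axis2_E02)
  have hu: "h w = (e1', e2', e3, 0, 0, f3')" unfolding h_def using u1 u2 by simp
  have "rank_le_one p1 p2 p3 (e1', e2', e3, 0, 0, f3')" using norm_similarity_rank_le_one[OF p sh r] hu by simp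
  note R = rank_le_one_coords[OF this]
  have "e1' = 0" using R(2) e3 by simp
  moreover have "e2' = 0" using R(1) e3 by simp
  moreover have "f3' = 0" using R(6) e3 by (simp add: sm_eq_0_iff)
  ultimately show ?thesis using sh fh hu w by (intro exI[of _ h]) simp
qed

lemma exists_similarity_to_axis2:
  assumes p: "p1*p2*p3 = 1" and r: "rank_le_one p1 p2 p3 v" and m: "cubic_norm3 p1 p2 p3 (l,0,0,0,0,0) v w \<noteq> 0"
  shows "\<exists>h \<mu>. norm_similarity p1 p2 p3 h \<and> fixes_axis1 h \<and> h v = (0,\<mu>,0,0,0,0)"
proof -
  obtain b1 b2 b3 d1 d2 d3 where v: "v = (b1,b2,b3,d1,d2,d3)" by (cases v) auto
  obtain e1 e2 e3 f1 f2 f3 where w: "w = (e1,e2,e3,f1,f2,f3)" by (cases w) auto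
  have "b2 \<noteq> 0 \<or> d1 \<noteq> 0 \<or> b3 \<noteq> 0" using m unfolding v w cubic_norm3_axis1 by auto
  then obtain h1 where h1: "norm_similarity p1 p2 p3 h1" "fixes_axis1 h1" "fst (snd (h1 v)) \<noteq> 0"
    using snd_nonzero_fixing_axis1[OF p] v by blast
  obtain h2 where h2: "norm_similarity p1 p2 p3 h2" "fixes_axis1 h2" "h2 (h1 v) = (0,fst (snd (h1 v)),0,0,0,0)"
    using rank_le_one_to_axis2[OF p norm_similarity_rank_le_one[OF p h1(1) r] h1(3)] by blast
  show ?thesis using h1 h2
    by (intro exI[of _ "h2 \<circ> h1"] exI[of _ "fst (snd (h1 v))"]) (simp add: norm_similarity_comp fixes_axis1_comp)
qed

lemma rank_le_one_frame_to_axes: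
  assumes p: "p1*p2*p3 = 1" and r: "rank_le_one p1 p2 p3 f1" "rank_le_one p1 p2 p3 f2" "rank_le_one p1 p2 p3 f3"
    and nz: "f1 \<noteq> alb_zero" and m: "cubic_norm3 p1 p2 p3 f1 f2 f3 \<noteq> 0"
  shows "\<exists>h l1 l2 l3. norm_similarity p1 p2 p3 h \<and> h f1 = (l1,0,0,0,0,0) \<and> h f2 = (0,l2,0,0,0,0)
     \<and> h f3 = (0,0,l3,0,0,0)"
proof -
  obtain h1 l where h1: "norm_similarity p1 p2 p3 h1" "h1 f1 = (l,0,0,0,0,0)" using exists_similarity_to_axis1[OF p r(1) nz] by blast
  obtain \<nu>1 where n1: "\<nu>1 \<noteq> 0" "\<forall>a b c. cubic_norm3 p1 p2 p3 (h1 a) (h1 b) (h1 c) = \<nu>1 * cubic_norm3 p1 p2 p3 a b c"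
    using norm_similarity_cubic_norm3[OF h1(1)] by blast
  have m1: "cubic_norm3 p1 p2 p3 (l,0,0,0,0,0) (h1 f2) (h1 f3) \<noteq> 0"
    using n1 m h1(2) by (metis mult_eq_0_iff)
  obtain h2 \<mu> where h2: "norm_similarity p1 p2 p3 h2" "fixes_axis1 h2" "h2 (h1 f2) = (0,\<mu>,0,0,0,0)"
    using exists_similarity_to_axis2[OF p norm_similarity_rank_le_one[OF p h1(1) r(2)] m1] by blast
  obtain \<nu>2 where n2: "\<nu>2 \<noteq> 0" "\<forall>a b c. cubic_norm3 p1 p2 p3 (h2 a) (h2 b) (h2 c) = \<nu>2 * cubic_norm3 p1 p2 p3 a b c"
    using norm_similarity_cubic_norm3[OF h2(1)] by blast
  have "h2 (l,0,0,0,0,0) = (l,0,0,0,0,0)" using h2(2) unfolding fixes_axis1_def by blast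
  then have m2: "cubic_norm3 p1 p2 p3 (l,0,0,0,0,0) (0,\<mu>,0,0,0,0) (h2 (h1 f3)) \<noteq> 0"
    using n2 m1 h2(3) by (metis mult_eq_0_iff)
  obtain e1 e2 e3 g1 g2 g3 where w: "h2 (h1 f3) = (e1,e2,e3,g1,g2,g3)" by (cases "h2 (h1 f3)") auto
  have "e3 \<noteq> 0" using m2 unfolding w cubic_norm3_axis1 by simp
  then obtain h3 where h3: "norm_similarity p1 p2 p3 h3" "fixes_axis1 h3" "fixes_axis2 h3" "h3 (h2 (h1 f3)) = (0,0,e3,0,0,0)"
    using rank_le_one_to_axis3[OF p norm_similarity_rank_le_one[OF p h2(1)
        norm_similarity_rank_le_one[OF p h1(1) r(3)]]] w by fastforce
  have a: "h3 (l,0,0,0,0,0) = (l,0,0,0,0,0)" using h3(2) unfolding fixes_axis1_def by blast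
  have b: "h3 (0,\<mu>,0,0,0,0) = (0,\<mu>,0,0,0,0)" using h3(3) unfolding fixes_axis2_def by blast
  show ?thesis
    using h1 h2 h3 a b \<open>h2 (l,0,0,0,0,0) = (l,0,0,0,0,0)\<close>
    by (intro exI[of _ "h3 \<circ> h2 \<circ> h1"] exI[of _ l] exI[of _ \<mu>] exI[of _ e3]) (simp add: norm_similarity_comp)
qed

section \<open>Split cubic subalgebras\<close>

lemma alb_trace_add: "alb_trace (alb_add x y) = alb_trace x + alb_trace y"
  by (cases x, cases y) (simp add: alb_add_simp)

lemma cubic_norm_one: "p1*p2*p3 = 1 \<Longrightarrow> cubic_norm p1 p2 p3 alb_one = 1"
  by (simp add: alb_one_def)

lemma rank_le_one_sum_cubic_norm:
  assumes p: "p1*p2*p3 = 1" and "rank_le_one p1 p2 p3 f" "rank_le_one p1 p2 p3 g"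
  shows "cubic_norm p1 p2 p3 (alb_add f g) = 0"
  using assms by (simp add: cubic_norm_add rank_le_one_cubic_norm rank_le_one_norm_deriv)

lemma idempotent_frame:
  assumes p: "p1*p2*p3 = 1" and three: "(3::'k) \<noteq> 0"
    and idem: "jordan_mul p1 p2 p3 f1 f1 = f1" "jordan_mul p1 p2 p3 f2 f2 = f2"
      "jordan_mul p1 p2 p3 f3 f3 = f3"
    and ns: "\<nexists>a. f1 = (a,a,a,0,0,0)" "\<nexists>a. f2 = (a,a,a,0,0,0)" "\<nexists>a. f3 = (a,a,a,0,0,0)"
    and sum: "alb_add (alb_add f1 f2) f3 = alb_one"
  shows "rank_le_one p1 p2 p3 f1" "rank_le_one p1 p2 p3 f2" "rank_le_one p1 p2 p3 f3"
    and "cubic_norm3 p1 p2 p3 f1 f2 f3 = 1"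
proof -
  have "alb_trace f1 + alb_trace f2 + alb_trace f3 = 3"
    using arg_cong[OF sum, of alb_trace] by (simp add: alb_trace_add alb_one_def)
  moreover have "alb_trace f1 = 1 \<or> alb_trace f1 = 2" "alb_trace f2 = 1 \<or> alb_trace f2 = 2"
    "alb_trace f3 = 1 \<or> alb_trace f3 = 2"
    using idempotent_trace(2)[OF p idem(1) ns(1)] idempotent_trace(2)[OF p idem(2) ns(2)]
      idempotent_trace(2)[OF p idem(3) ns(3)] by simp_all
  moreover have "(4::'k) \<noteq> 3" "(5::'k) \<noteq> 3" "(6::'k) \<noteq> 3"
  proof (safe)
    assume "(4::'k) = 3" then have "(4::'k) - 3 = 0" by simp
    then show False by simp
  next
    assume "(5::'k) = 3" then have "(5::'k) - 3 = 0" by simp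
    then show False using two_neq_zero by simp
  next
    assume "(6::'k) = 3" then have "(6::'k) - 3 = 0" by simp
    then show False using three by simp
  qed
  ultimately have "alb_trace f1 = 1" "alb_trace f2 = 1" "alb_trace f3 = 1" by auto
  then show rk: "rank_le_one p1 p2 p3 f1" "rank_le_one p1 p2 p3 f2" "rank_le_one p1 p2 p3 f3"
    using idempotent_trace_one_rank_le_one[OF p] idem ns by blast+
  show "cubic_norm3 p1 p2 p3 f1 f2 f3 = 1"
    unfolding cubic_norm3_def sum cubic_norm_one[OF p]
    using rk by (simp add: rank_le_one_cubic_norm[OF p] rank_le_one_sum_cubic_norm[OF p])
qed

lemma split_cubic_etale_sub_idempotents:
  assumes L: "split_cubic_etale_sub C (g1, g2, g3) L"
    and p: "p1 = inverse g3 * g2" "p2 = inverse g1 * g3" "p3 = inverse g2 * g1"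
  obtains f1 f2 f3 where
    "jordan_mul p1 p2 p3 f1 f1 = f1" "jordan_mul p1 p2 p3 f2 f2 = f2" "jordan_mul p1 p2 p3 f3 f3 = f3"
    "\<nexists>a. f1 = (a,a,a,0,0,0)" "\<nexists>a. f2 = (a,a,a,0,0,0)" "\<nexists>a. f3 = (a,a,a,0,0,0)"
    "alb_add (alb_add f1 f2) f3 = alb_one"
    "L = {alb_add (alb_add (alb_smul C x f1) (alb_smul C y f2)) (alb_smul C z f3) | x y z. True}"
proof -
  from L obtain \<phi> :: "'k \<times> 'k \<times> 'k \<Rightarrow> ('k, 'c) alb" where
    "bij_betw \<phi> UNIV L" and one: "alb_one \<in> L"
    and padd: "\<And>a1 a2 a3 b1 b2 b3. \<phi> (a1 + b1, a2 + b2, a3 + b3) = alb_add (\<phi> (a1, a2, a3)) (\<phi> (b1, b2, b3))"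
    and psm: "\<And>s a1 a2 a3. \<phi> (s * a1, s * a2, s * a3) = alb_smul C s (\<phi> (a1, a2, a3))"
    and pmul: "\<And>a1 a2 a3 b1 b2 b3.
      is_jprod C (g1, g2, g3) (\<phi> (a1, a2, a3)) (\<phi> (b1, b2, b3)) (\<phi> (a1 * b1, a2 * b2, a3 * b3))"
    unfolding split_cubic_etale_sub_def by (elim conjE exE) blast
  then have inj: "inj \<phi>" and range: "L = range \<phi>" by (auto simp: bij_betw_def)
  have mul: "\<phi> (a1 * b1, a2 * b2, a3 * b3) = jordan_mul p1 p2 p3 (\<phi> (a1, a2, a3)) (\<phi> (b1, b2, b3))"
    for a1 a2 a3 b1 b2 b3 unfolding p by (rule is_jprod_jordan_mul[OF pmul])
  obtain v1 v2 v3 where v: "\<phi> (v1, v2, v3) = alb_one" using one range by (metis rangeE prod_cases3)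
  have "\<phi> (v1 * 1, v2 * 1, v3 * 1) = \<phi> (1, 1, 1)" unfolding mul v jordan_mul_one ..
  then have phi_one: "\<phi> (1, 1, 1) = alb_one" using inj v by (metis injD mult_1_right)
  define f1 f2 f3 where "f1 = \<phi> (1,0,0)" and "f2 = \<phi> (0,1,0)" and "f3 = \<phi> (0,0,1)"
  have decomp: "\<phi> (x, y, z) = alb_add (alb_add (alb_smul C x f1) (alb_smul C y f2)) (alb_smul C z f3)"
    for x y z
  proof -
    have "\<phi> (x, y, z) = alb_add (alb_add (\<phi> (x*1, x*0, x*0)) (\<phi> (y*0, y*1, y*0))) (\<phi> (z*0, z*0, z*1))"
      unfolding padd[symmetric] by simp
    then show ?thesis unfolding psm f1_def f2_def f3_def .
  qed
  have non_scalar: "\<nexists>a. \<phi> e = (a,a,a,0,0,0)" if "\<nexists>a. e = (a,a,a)" for e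
  proof
    assume "\<exists>a. \<phi> e = (a,a,a,0,0,0)"
    then obtain a where "\<phi> e = alb_smul C a (\<phi> (1,1,1))" by (auto simp: phi_one alb_one_def alb_smul_simp)
    then have "\<phi> e = \<phi> (a, a, a)" using psm[of a 1 1 1] by simp
    with that show False using inj by (metis injD)
  qed
  have "jordan_mul p1 p2 p3 f1 f1 = f1" "jordan_mul p1 p2 p3 f2 f2 = f2"
    "jordan_mul p1 p2 p3 f3 f3 = f3"
    unfolding f1_def f2_def f3_def mul[symmetric] by simp_all
  moreover have "\<nexists>a. f1 = (a,a,a,0,0,0)" "\<nexists>a. f2 = (a,a,a,0,0,0)" "\<nexists>a. f3 = (a,a,a,0,0,0)"
    using non_scalar[of "(1,0,0)"] non_scalar[of "(0,1,0)"] non_scalar[of "(0,0,1)"]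
    unfolding f1_def f2_def f3_def by auto
  moreover have "alb_add (alb_add f1 f2) f3 = alb_one"
    using decomp[of 1 1 1] phi_one by (simp add: alb_smul_one)
  moreover have "L = {alb_add (alb_add (alb_smul C x f1) (alb_smul C y f2)) (alb_smul C z f3) | x y z. True}"
    unfolding range decomp[symmetric] by auto
  ultimately show ?thesis by (rule that)
qed

end

context composition_algebra
begin

lemma alb_linear_inv:
  assumes "alb_linear C h" "bij h"
  shows "alb_linear C (inv h)"
proof -
  have hi: "h (inv h x) = x" for x using assms(2) by (simp add: bij_is_surj surj_f_inv_f)
  have ih: "inv h (h x) = x" for x using assms(2) by (simp add: bij_is_inj)
  have add: "h (alb_add x y) = alb_add (h x) (h y)" for x y using assms(1) unfolding alb_linear_def by blast
  have sm: "h (alb_smul C k x) = alb_smul C k (h x)" for k x using assms(1) unfolding alb_linear_def by blast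
  show ?thesis unfolding alb_linear_def
  proof (intro conjI allI)
    fix x y
    have "inv h (alb_add x y) = inv h (h (alb_add (inv h x) (inv h y)))" by (simp add: add hi)
    then show "inv h (alb_add x y) = alb_add (inv h x) (inv h y)" by (simp add: ih)
  next
    fix k x
    have "inv h (alb_smul C k x) = inv h (h (alb_smul C k (inv h x)))" by (simp add: sm hi)
    then show "inv h (alb_smul C k x) = alb_smul C k (inv h x)" by (simp add: ih)
  qed
qed

lemma alb_norm_eq_cubic_norm:
  "alb_norm C (g1,g2,g3) x = cubic_norm (inverse g3 * g2) (inverse g1 * g3) (inverse g2 * g1) x"
  by (cases x) (simp add: alb_norm_def algebra_simps)

lemma alb_norm3_eq_cubic_norm3:
  "alb_norm3 C (g1,g2,g3) a b c = cubic_norm3 (inverse g3 * g2) (inverse g1 * g3) (inverse g2 * g1) a b c"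
  unfolding alb_norm3_def cubic_norm3_def alb_norm_eq_cubic_norm ..

lemma in_Str_inv_norm_similarity:
  assumes "norm_similarity (inverse g3 * g2) (inverse g1 * g3) (inverse g2 * g1) h"
  shows "in_Str C (g1, g2, g3) (inv h)"
proof -
  obtain \<nu> where "alb_linear C h" "bij h" "\<nu> \<noteq> 0"
    and n: "\<And>a. alb_norm C (g1,g2,g3) (h a) = \<nu> * alb_norm C (g1,g2,g3) a"
    using assms unfolding norm_similarity_def alb_norm_eq_cubic_norm by blast
  have lin: "alb_linear C (inv h)" by (rule alb_linear_inv) fact+
  have hi: "h (inv h x) = x" for x using \<open>bij h\<close> by (simp add: bij_is_surj surj_f_inv_f)
  have N: "alb_norm C (g1,g2,g3) (inv h a) = inverse \<nu> * alb_norm C (g1,g2,g3) a" for a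
    using n[of "inv h a"] \<open>\<nu> \<noteq> 0\<close> by (simp add: hi)
  have M: "alb_norm3 C (g1,g2,g3) (inv h a) (inv h b) (inv h c) = inverse \<nu> * alb_norm3 C (g1,g2,g3) a b c"
    for a b c unfolding alb_norm3_eq_cubic_norm3
    by (rule cubic_norm3_linear_similarity[OF lin]) (use N in \<open>simp only: alb_norm_eq_cubic_norm\<close>)
  show ?thesis unfolding in_Str_def
    by (intro conjI exI[of _ "inverse \<nu>"] allI lin bij_imp_bij_inv[OF \<open>bij h\<close>] N M)
      (use \<open>\<nu> \<noteq> 0\<close> in simp)
qed

lemma inv_image_diag_sub:
  assumes h: "bij h" "alb_linear C h"
    and hf: "h f1 = (l1,0,0,0,0,0)" "h f2 = (0,l2,0,0,0,0)" "h f3 = (0,0,l3,0,0,0)"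
    and nz: "f1 \<noteq> alb_zero" "f2 \<noteq> alb_zero" "f3 \<noteq> alb_zero"
  shows "inv h ` diag_sub =
    {alb_add (alb_add (alb_smul C x f1) (alb_smul C y f2)) (alb_smul C z f3) | x y z. True}"
proof -
  have add: "h (alb_add u v) = alb_add (h u) (h v)" and sm: "h (alb_smul C k u) = alb_smul C k (h u)"
    for u v k using h(2) unfolding alb_linear_def by blast+
  have "h alb_zero = alb_zero"
    using sm[of 0 alb_zero] by (cases "h alb_zero") (simp add: alb_zero_def alb_smul_simp)
  then have "l1 \<noteq> 0" and "l2 \<noteq> 0" and "l3 \<noteq> 0"
    using hf nz bij_is_inj[OF h(1)] by (auto simp: alb_zero_def) (metis inj_eq)+
  have image: "h (alb_add (alb_add (alb_smul C x f1) (alb_smul C y f2)) (alb_smul C z f3)) =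
      (x * l1, y * l2, z * l3, 0, 0, 0)" for x y z
    unfolding add sm hf by (simp add: alb_smul_simp alb_add_simp)
  have inv_h: "inv h (h u) = u" for u using bij_is_inj[OF h(1)] by simp
  show ?thesis
  proof (intro set_eqI iffI)
    fix u assume "u \<in> inv h ` diag_sub"
    then obtain a1 a2 a3 where u: "u = inv h (a1,a2,a3,0,0,0)" unfolding diag_sub_def by blast
    have "(a1,a2,a3,0,0,0) = h (alb_add (alb_add (alb_smul C (a1 / l1) f1) (alb_smul C (a2 / l2) f2))
        (alb_smul C (a3 / l3) f3))"
      unfolding image using \<open>l1 \<noteq> 0\<close> \<open>l2 \<noteq> 0\<close> \<open>l3 \<noteq> 0\<close> by simp
    then have "u = alb_add (alb_add (alb_smul C (a1 / l1) f1) (alb_smul C (a2 / l2) f2))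
        (alb_smul C (a3 / l3) f3)"
      unfolding u by (metis inv_h)
    then show "u \<in> {alb_add (alb_add (alb_smul C x f1) (alb_smul C y f2)) (alb_smul C z f3) | x y z. True}"
      by blast
  next
    fix u assume "u \<in> {alb_add (alb_add (alb_smul C x f1) (alb_smul C y f2)) (alb_smul C z f3) | x y z. True}"
    then obtain x y z where "u = alb_add (alb_add (alb_smul C x f1) (alb_smul C y f2)) (alb_smul C z f3)"
      by blast
    then have "u = inv h (x * l1, y * l2, z * l3, 0, 0, 0)" using image inv_h by metis
    then show "u \<in> inv h ` diag_sub" unfolding diag_sub_def by blast
  qed
qed

end

theorem mainTheorem4:
  fixes C :: "('k::field, 'c::ab_group_add) kalg"
    and g1 g2 g3 :: 'k
    and L2 :: "('k, 'c) alb set"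
  assumes "(2::'k) \<noteq> 0" and "(3::'k) \<noteq> 0"
    and "octonion_algebra C"
    and "g1 \<noteq> 0" and "g2 \<noteq> 0" and "g3 \<noteq> 0"
    and "split_cubic_etale_sub C (g1, g2, g3) L2"
  shows "\<exists>g. in_Str C (g1, g2, g3) g \<and> g ` diag_sub = L2"
proof -
  interpret composition_algebra C by (rule octonion_algebra_composition_algebra) fact
  interpret composition_algebra_char_ne_2 C by unfold_locales fact
  define p1 p2 p3 where "p1 = inverse g3 * g2" and "p2 = inverse g1 * g3" and "p3 = inverse g2 * g1"
  have p: "p1 * p2 * p3 = 1" unfolding p1_def p2_def p3_def using assms(4-6) by (simp add: field_simps)
  obtain f1 f2 f3 where idem: "jordan_mul p1 p2 p3 f1 f1 = f1" "jordan_mul p1 p2 p3 f2 f2 = f2"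
      "jordan_mul p1 p2 p3 f3 f3 = f3"
    and ns: "\<nexists>a. f1 = (a,a,a,0,0,0)" "\<nexists>a. f2 = (a,a,a,0,0,0)" "\<nexists>a. f3 = (a,a,a,0,0,0)"
    and sum: "alb_add (alb_add f1 f2) f3 = alb_one"
    and L2: "L2 = {alb_add (alb_add (alb_smul C x f1) (alb_smul C y f2)) (alb_smul C z f3) | x y z. True}"
    by (rule split_cubic_etale_sub_idempotents[OF assms(7) p1_def p2_def p3_def])
  note frame = idempotent_frame[OF p assms(2) idem ns sum]
  have nz: "f1 \<noteq> alb_zero" "f2 \<noteq> alb_zero" "f3 \<noteq> alb_zero" using ns by (auto simp: alb_zero_def)
  obtain h l1 l2 l3 where h: "norm_similarity p1 p2 p3 h"
    and hf: "h f1 = (l1,0,0,0,0,0)" "h f2 = (0,l2,0,0,0,0)" "h f3 = (0,0,l3,0,0,0)"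
    using rank_le_one_frame_to_axes[OF p frame(1-3) nz(1)] frame(4) by auto
  from h have "alb_linear C h" "bij h" unfolding norm_similarity_def by blast+
  with h show ?thesis unfolding p1_def p2_def p3_def
    by (intro exI[of _ "inv h"] conjI in_Str_inv_norm_similarity)
      (use inv_image_diag_sub[OF _ _ hf nz] L2 in blast)+
qed

end
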